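(* Let $\beta$ be an ordered partition of $N$, $\zeta\in(\mathfrak t')^*_\beta$, $w\in W^\beta$, and $i\in\{1,\dots,N-1\}$ with $\alpha_i\in\bar\Pi\cap w(\bar R_{\beta,+})$. Then $s_i\cdot\varphi_w\cdot{\bf 1}_\zeta=\varphi_w\cdot{\bf 1}_\zeta$ in $\mathcal Y_\beta(\zeta)$.
   Context: Fix an integer $N\ge2$. Let $\bar{\mathfrak t}=\bigoplus_{i=1}^N\mathbb C\epsilon_i^\vee$, $\mathfrak t'=\bar{\mathfrak t}\oplus\mathbb Cc$, and let $\epsilon_1,\dots,\epsilon_N\in\bar{\mathfrak t}^*$ be the dual basis; regard $\bar{\mathfrak t}^*\subset(\mathfrak t')^*=\bar{\mathfrak t}^*\oplus\mathbb Cc^*$ with $\epsilon_i(c)=0$, $c^*(c)=1$, $c^*(\bar{\mathfrak t})=0$. Put $(\epsilon_i,\epsilon_j)=\delta_{ij}$ and, for $\zeta\in(\mathfrak t')^*$ and $\bar\alpha=\sum_ia_i\epsilon_i$, $(\zeta,\bar\alpha)=\sum_ia_i\zeta(\epsilon_i^\vee)$. Let $\bar R=\{\alpha_{ij}=\epsilon_i-\epsilon_j:i\ne j\}$, $\bar R_+=\{\alpha_{ij}:i<j\}$, $\alpha_i=\alpha_{i,i+1}$ ($1\le i\le N-1$), $\bar\Pi=\{\alpha_1,\dots,\alpha_{N-1}\}$. With a formal symbol $\delta$, the affine roots are $R=\{\bar\alpha+k\delta:\bar\alpha\in\bar R,k\in\mathbb Z\}$, $R_+=\{\bar\alpha+k\delta:\bar\alpha\in\bar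 R_+,k\ge0\}\cup\{-\bar\alpha+k\delta:\bar\alpha\in\bar R_+,k>0\}$, $R_-=R\setminus R_+$, and $\alpha_0=\delta-\alpha_{1N}$; indices $0,\dots,N-1$ are read modulo $N$. For $\alpha=\bar\alpha+k\delta\in R$ and $\zeta\in(\mathfrak t')^*$ set $(\zeta,\alpha)=(\zeta,\bar\alpha)+k\zeta(c)$; the coroot is $\alpha^\vee=\bar\alpha^\vee+kc\in\mathfrak t'$, where $(\epsilon_i-\epsilon_j)^\vee=\epsilon_i^\vee-\epsilon_j^\vee$, and $\alpha(\xi):=\bar\alpha(\xi)$ for $\xi\in\mathfrak t'$. Let $\bar P=\bigoplus_i\mathbb Z\epsilon_i$, $\bar W=\mathfrak S_N$ acting on indices ($w(\epsilon_i)=\epsilon_{w(i)}$, $w(\epsilon_i^\vee)=\epsilon^\vee_{w(i)}$, $w(c)=c$, $w(c^* )=c^*$), and $W=\bar W\ltimes\bar P$ with elements $wt_\eta$ and $wt_\eta w^{-1}=t_{w(\eta)}$. $W$ acts on $R$ by $w(\bar\alpha+k\delta)=w(\bar\alpha)+k\delta$, $t_\eta(\bar\alpha+k\delta)=\bar\alpha+(k-(\eta,\bar\alpha))\delta$; on $\mathfrak t'$ by $t_\eta(\xi)=\xi-\eta(\xi)c$; and on $(\mathfrak t')^*$ by the affine action $t_\eta(\zeta)=\zeta+\zeta(c)\eta$. For $\alpha=\bar\alpha+k\delta\in R$ let $s_\alpha=t_{-k\bar\alpha}s_{\bar\alpha}$, $s_i=s_{\alpha_i}$, $\pi=t_{\epsilon_1}s_1\cdots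 s_{N-1}$; $W$ is generated by $s_0,\dots,s_{N-1},\pi^{\pm1}$. $S(w)=R_+\cap w^{-1}(R_-)$, $l(w)=\#S(w)$, reduced expressions $w=\pi^ks_{j_1}\cdots s_{j_l}$ have $l=l(w)$. The degenerate double affine Hecke algebra $\mathcal H$ is the unital associative $\mathbb C$-algebra equal to $\mathbb C[W]\otimes S[\mathfrak t']$ as a vector space (via multiplication), in which $\mathbb C[W]$ and $S[\mathfrak t']$ are subalgebras and $s_i\xi-s_i(\xi)s_i=-\alpha_i(\xi)$ ($0\le i\le N-1$, $\xi\in\mathfrak t'$), $\pi\xi=\pi(\xi)\pi$. Intertwiners: $\varphi_i=1+s_i\alpha_i^\vee$, $\varphi_\pi=\pi$, $\varphi_w=\varphi_\pi^k\varphi_{j_1}\cdots\varphi_{j_l}$ for a reduced expression $w=\pi^ks_{j_1}\cdots s_{j_l}$. An ordered partition $\beta$ of $N$ gives blocks of consecutive indices of sizes $\beta_1,\dots,\beta_r$; $\bar R_\beta=\{\alpha_{ij}:i,j\text{ in the same block}\}$, $\bar R_{\beta,+}=\bar R_\beta\cap\bar R_+$, $\bar\Pi_\beta=\bar\Pi\cap\bar R_\beta$, $\bar W_\beta=\langle s_\alpha:\alpha\in\bar\Pi_\beta\rangle$; $\mathcal H_\beta$ is the subalgebra generated by $S[\mathfrak t']$ and $\bar W_\beta$. $(\mathfrak t')^*_\beta=\{\zeta\in(\mathfrak t')^*:(\zeta,\alpha)=-1\ \forall\alpha\in\bar\Pi_\beta\}$. For such $\zeta$, $\mathbb C1_\zeta$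 is the one-dimensional $\mathcal H_\beta$-module with $w1_\zeta=1_\zeta$ ($w\in\bar W_\beta$), $\xi1_\zeta=\zeta(\xi)1_\zeta$; $\mathcal Y_\beta(\zeta)=\mathcal H\otimes_{\mathcal H_\beta}\mathbb C1_\zeta$ with ${\bf 1}_\zeta=1\otimes1_\zeta$. $W^\beta=\{w\in W:l(wu)\ge l(w)\ \forall u\in\bar W_\beta\}$. *)

theory Defs
  imports "HOL-Combinatorics.Combinatorics" Complex_Main
begin

text \<open>An element w t_eta of W is encoded as the pair (w, eta), where w is a
permutation of {1..N} (identity elsewhere) and eta : nat => int is the
coefficient vector of eta = sum_i eta_i eps_i (zero outside {1..N}).\<close>

type_synonym Welt = "(nat \<Rightarrow> nat) \<times> (nat \<Rightarrow> int)"

definition Wset :: "nat \<Rightarrow> Welt set" where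
  "Wset N = {(w, eta). w permutes {1..N} \<and> (\<forall>j. j \<notin> {1..N} \<longrightarrow> eta j = 0)}"

text \<open>(w t_eta)(u t_mu) = (wu) t_(u^{-1}(eta) + mu), and (u^{-1} eta)_j = eta_(u j).\<close>
definition Wmult :: "Welt \<Rightarrow> Welt \<Rightarrow> Welt" where
  "Wmult a b = (fst a \<circ> fst b, \<lambda>j. snd a (fst b j) + snd b j)"

definition Wone :: Welt where
  "Wone = (id, \<lambda>_. 0)"

definition Winv :: "Welt \<Rightarrow> Welt" where
  "Winv a = (inv (fst a), \<lambda>j. - snd a (inv (fst a) j))"

definition Wprod :: "Welt list \<Rightarrow> Welt" where
  "Wprod xs = foldr Wmult xs Wone"

definition Wpow :: "Welt \<Rightarrow> int \<Rightarrow> Welt" where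
  "Wpow a k = (if 0 \<le> k then (Wmult a ^^ nat k) Wone else (Wmult (Winv a) ^^ nat (- k)) Wone)"

definition Wt :: "(nat \<Rightarrow> int) \<Rightarrow> Welt" where
  "Wt eta = (id, eta)"

definition ind :: "nat \<Rightarrow> nat \<Rightarrow> int" where
  "ind i = (\<lambda>l. if l = i then 1 else 0)"

definition sbar :: "nat \<Rightarrow> nat \<Rightarrow> Welt" where
  "sbar i j = (transpose i j, \<lambda>_. 0)"

text \<open>An affine root eps_i - eps_j + k delta is encoded as (i, j, k).\<close>
type_synonym root = "nat \<times> nat \<times> int"

definition Rset :: "nat \<Rightarrow> root set" where
  "Rset N = {(i, j, k). i \<in> {1..N} \<and> j \<in> {1..N} \<and> i \<noteq> j}"

definition Rpos :: "nat \<Rightarrow> root set" where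
  "Rpos N = {(i, j, k) \<in> Rset N. (i < j \<and> 0 \<le> k) \<or> (j < i \<and> 0 < k)}"

definition Rneg :: "nat \<Rightarrow> root set" where
  "Rneg N = Rset N - Rpos N"

text \<open>s_alpha = t_{-k alpha_bar} s_{alpha_bar} for alpha = alpha_bar + k delta\<close>
definition s_root :: "root \<Rightarrow> Welt" where
  "s_root r = (case r of (i, j, k) \<Rightarrow>
      Wmult (Wt (\<lambda>l. - k * (ind i l - ind j l))) (sbar i j))"

text \<open>simple roots: alpha_0 = delta - alpha_{1N} = eps_N - eps_1 + delta, alpha_i = eps_i - eps_{i+1}\<close>
definition alpha_simple :: "nat \<Rightarrow> nat \<Rightarrow> root" where
  "alpha_simple N i = (if i = 0 then (N, 1, 1) else (i, Suc i, 0))"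

definition sgen :: "nat \<Rightarrow> nat \<Rightarrow> Welt" where
  "sgen N i = s_root (alpha_simple N i)"

definition piW :: "nat \<Rightarrow> Welt" where
  "piW N = Wmult (Wt (ind 1)) (Wprod (map (sgen N) [1..<N]))"

text \<open>action of W on affine roots: w t_eta (alpha_bar + k delta)
  = w(alpha_bar) + (k - (eta, alpha_bar)) delta\<close>
definition Wact_root :: "Welt \<Rightarrow> root \<Rightarrow> root" where
  "Wact_root a r = (case r of (i, j, k) \<Rightarrow>
      (fst a i, fst a j, k - (snd a i - snd a j)))"

definition lengthW :: "nat \<Rightarrow> Welt \<Rightarrow> nat" where
  "lengthW N a = card {r \<in> Rpos N. Wact_root a r \<in> Rneg N}"

text \<open>xi = sum_i x_i eps_i^vee + cc c is encoded as (x, cc), x zero outside {1..N}.\<close>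
type_synonym tvec = "(nat \<Rightarrow> complex) \<times> complex"

definition tset :: "nat \<Rightarrow> tvec set" where
  "tset N = {(x, cc). \<forall>j. j \<notin> {1..N} \<longrightarrow> x j = 0}"

text \<open>w t_eta (xi) = w(xi - eta(xi) c)\<close>
definition Wact_t :: "nat \<Rightarrow> Welt \<Rightarrow> tvec \<Rightarrow> tvec" where
  "Wact_t N a xi = (\<lambda>j. fst xi (inv (fst a) j),
                    snd xi - (\<Sum>l\<in>{1..N}. of_int (snd a l) * fst xi l))"

definition coroot :: "root \<Rightarrow> tvec" where
  "coroot r = (case r of (i, j, k) \<Rightarrow> (\<lambda>l. of_int (ind i l - ind j l), of_int k))"

text \<open>alpha(xi) = alpha_bar(xi)\<close>
definition root_eval :: "root \<Rightarrow> tvec \<Rightarrow> complex" where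
  "root_eval r xi = (case r of (i, j, k) \<Rightarrow> fst xi i - fst xi j)"

text \<open>zeta in (t')^* is encoded by (z, zc) with z i = zeta(eps_i^vee), zc = zeta(c).\<close>
definition zeta_eval :: "nat \<Rightarrow> (nat \<Rightarrow> complex) \<times> complex \<Rightarrow> tvec \<Rightarrow> complex" where
  "zeta_eval N zeta xi = (\<Sum>l\<in>{1..N}. fst zeta l * fst xi l) + snd zeta * snd xi"

definition ordered_partition :: "nat \<Rightarrow> nat list \<Rightarrow> bool" where
  "ordered_partition N beta \<longleftrightarrow> (\<forall>b\<in>set beta. 0 < b) \<and> sum_list beta = N"

definition psum :: "nat list \<Rightarrow> nat \<Rightarrow> nat" where
  "psum beta m = sum_list (take m beta)"

definition same_block :: "nat list \<Rightarrow> nat \<Rightarrow> nat \<Rightarrow> bool" where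
  "same_block beta i j \<longleftrightarrow> (\<exists>m < length beta.
      psum beta m < i \<and> i \<le> psum beta (Suc m) \<and> psum beta m < j \<and> j \<le> psum beta (Suc m))"

text \<open>indices i of the simple roots alpha_i in Pi_beta\<close>
definition Pi_beta :: "nat \<Rightarrow> nat list \<Rightarrow> nat set" where
  "Pi_beta N beta = {i \<in> {1..<N}. same_block beta i (Suc i)}"

text \<open>R_bar_{beta,+}, as affine roots with k = 0\<close>
definition Rbeta_pos :: "nat \<Rightarrow> nat list \<Rightarrow> root set" where
  "Rbeta_pos N beta = {(i, j, 0) | i j. 1 \<le> i \<and> i < j \<and> j \<le> N \<and> same_block beta i j}"

inductive_set Wbar_beta :: "nat \<Rightarrow> nat list \<Rightarrow> Welt set" for N beta where
  one: "Wone \<in> Wbar_beta N beta"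
| step: "a \<in> Wbar_beta N beta \<Longrightarrow> i \<in> Pi_beta N beta \<Longrightarrow> Wmult (sgen N i) a \<in> Wbar_beta N beta"

definition Wbeta_min :: "nat \<Rightarrow> nat list \<Rightarrow> Welt set" where
  "Wbeta_min N beta = {a \<in> Wset N. \<forall>u \<in> Wbar_beta N beta. lengthW N a \<le> lengthW N (Wmult a u)}"

definition zeta_beta :: "nat \<Rightarrow> nat list \<Rightarrow> ((nat \<Rightarrow> complex) \<times> complex) set" where
  "zeta_beta N beta = {zeta. \<forall>i \<in> Pi_beta N beta. fst zeta i - fst zeta (Suc i) = -1}"

text \<open>Image of xi in S[t'] under the algebra map determined by Y i (= eps_i^vee) and Z (= c).\<close>
definition hmap :: "(complex \<Rightarrow> 'a::ring_1) \<Rightarrow> (nat \<Rightarrow> 'a) \<Rightarrow> 'a \<Rightarrow> nat \<Rightarrow> tvec \<Rightarrow> 'a" where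
  "hmap \<iota> Y Z N xi = (\<Sum>l\<in>{1..N}. \<iota> (fst xi l) * Y l) + \<iota> (snd xi) * Z"

text \<open>(\<iota>, g, Y, Z) is an algebra homomorphism from the degenerate DAHA H into the
  complex algebra 'a (complex scalars acting through the central ring map \<iota>):
  the defining relations of H hold for the images of the generators.\<close>
definition dDAHA_hom :: "nat \<Rightarrow> (complex \<Rightarrow> 'a::ring_1) \<Rightarrow> (Welt \<Rightarrow> 'a) \<Rightarrow> (nat \<Rightarrow> 'a) \<Rightarrow> 'a \<Rightarrow> bool" where
  "dDAHA_hom N \<iota> g Y Z \<longleftrightarrow>
     \<iota> 1 = 1 \<and> (\<forall>a b. \<iota> (a + b) = \<iota> a + \<iota> b) \<and> (\<forall>a b. \<iota> (a * b) = \<iota> a * \<iota> b) \<and>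
     (\<forall>a x. \<iota> a * x = x * \<iota> a) \<and>
     g Wone = 1 \<and> (\<forall>a \<in> Wset N. \<forall>b \<in> Wset N. g (Wmult a b) = g a * g b) \<and>
     (\<forall>i j. Y i * Y j = Y j * Y i) \<and> (\<forall>i. Y i * Z = Z * Y i) \<and>
     (\<forall>xi \<in> tset N. \<forall>i < N.
        g (sgen N i) * hmap \<iota> Y Z N xi - hmap \<iota> Y Z N (Wact_t N (sgen N i) xi) * g (sgen N i)
          = - \<iota> (root_eval (alpha_simple N i) xi)) \<and>
     (\<forall>xi \<in> tset N. g (piW N) * hmap \<iota> Y Z N xi = hmap \<iota> Y Z N (Wact_t N (piW N) xi) * g (piW N))"

definition is_module :: "('a::ring_1 \<Rightarrow> 'm::ab_group_add \<Rightarrow> 'm) \<Rightarrow> bool" where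
  "is_module act \<longleftrightarrow>
     (\<forall>a b m. act (a + b) m = act a m + act b m) \<and>
     (\<forall>a m n. act a (m + n) = act a m + act a n) \<and>
     (\<forall>a b m. act (a * b) m = act a (act b m)) \<and>
     (\<forall>m. act 1 m = m)"

definition phi_gen :: "nat \<Rightarrow> (complex \<Rightarrow> 'a::ring_1) \<Rightarrow> (Welt \<Rightarrow> 'a) \<Rightarrow> (nat \<Rightarrow> 'a) \<Rightarrow> 'a \<Rightarrow> nat \<Rightarrow> 'a" where
  "phi_gen N \<iota> g Y Z j = 1 + g (sgen N j) * hmap \<iota> Y Z N (coroot (alpha_simple N j))"

text \<open>phi for the expression pi^k s_{j1} ... s_{jl}\<close>
definition phi_expr :: "nat \<Rightarrow> (complex \<Rightarrow> 'a::ring_1) \<Rightarrow> (Welt \<Rightarrow> 'a) \<Rightarrow> (nat \<Rightarrow> 'a) \<Rightarrow> 'a \<Rightarrow> int \<Rightarrow> nat list \<Rightarrow> 'a" where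
  "phi_expr N \<iota> g Y Z k js = g (Wpow (piW N) k) * foldr (\<lambda>j acc. phi_gen N \<iota> g Y Z j * acc) js 1"

definition reduced_expr :: "nat \<Rightarrow> Welt \<Rightarrow> int \<Rightarrow> nat list \<Rightarrow> bool" where
  "reduced_expr N w k js \<longleftrightarrow> set js \<subseteq> {0..<N} \<and>
     w = Wmult (Wpow (piW N) k) (Wprod (map (sgen N) js)) \<and> length js = lengthW N w"

end

theory Submission
  imports Defs
begin

text \<open>Write \<open>w = \<pi>\<^sup>k x\<close> with \<open>x = s\<^sub>j\<^sub>1 \<cdots> s\<^sub>j\<^sub>l\<close> reduced. Since \<open>\<pi>\<^sup>k\<close> permutes the simple roots and
  preserves length, minimality of \<open>w\<close> in \<open>w W\<^sub>\<beta>\<close> makes \<open>x\<close> positive on the simple roots of \<open>\<beta>\<close>,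
  hence on all of \<open>R\<^sub>\<beta>\<^sub>,\<^sub>+\<close>. The root \<open>\<rho> = w\<^sup>-\<^sup>1(\<alpha>\<^sub>i) \<in> R\<^sub>\<beta>\<^sub>,\<^sub>+\<close> is sent by \<open>x\<close> to a simple root
  \<open>\<alpha>\<^sub>i\<^sub>'\<close>, so it cannot be a sum of two roots of \<open>R\<^sub>\<beta>\<^sub>,\<^sub>+\<close>: it is a simple root \<open>\<alpha>\<^sub>j\<close> of \<open>\<beta>\<close>.
  Then \<open>s\<^sub>i\<^sub>' x = x s\<^sub>j\<close> with both sides reduced, and since the intertwiners satisfy the braid
  relations, Matsumoto's theorem gives \<open>\<phi>\<^sub>i\<^sub>' \<phi>\<^sub>x = \<phi>\<^sub>x \<phi>\<^sub>j\<close>; conjugating by \<open>\<pi>\<^sup>k\<close>,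
  \<open>\<phi>\<^sub>i \<phi>\<^sub>w = \<phi>\<^sub>w \<phi>\<^sub>j\<close> and \<open>\<alpha>\<^sub>i\<^sup>\<or> \<phi>\<^sub>w = \<phi>\<^sub>w \<alpha>\<^sub>j\<^sup>\<or>\<close>. On \<open>1\<^sub>\<zeta>\<close>, \<open>s\<^sub>j\<close> acts trivially and \<open>\<alpha>\<^sub>j\<^sup>\<or>\<close> by
  \<open>-1\<close>, so \<open>\<phi>\<^sub>j 1\<^sub>\<zeta> = 0\<close> and \<open>0 = \<phi>\<^sub>i \<phi>\<^sub>w 1\<^sub>\<zeta> = \<phi>\<^sub>w 1\<^sub>\<zeta> - s\<^sub>i \<phi>\<^sub>w 1\<^sub>\<zeta>\<close>.\<close>

section \<open>The extended affine Weyl group and its action on roots\<close>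

definition Wword :: "nat \<Rightarrow> nat list \<Rightarrow> Welt" where
  "Wword N u = Wprod (map (sgen N) u)"

lemma Wmult_assoc: "Wmult (Wmult a b) c = Wmult a (Wmult b c)"
  by (simp add: Wmult_def o_assoc add.assoc)

lemma Wmult_Wone_left [simp]: "Wmult Wone a = a"
  by (simp add: Wmult_def Wone_def)

lemma Wmult_Wone_right [simp]: "Wmult a Wone = a"
  by (simp add: Wmult_def Wone_def)

lemma Wone_Wset [simp]: "Wone \<in> Wset N"
  by (simp add: Wone_def Wset_def permutes_id)

lemma Wmult_Wset: "a \<in> Wset N \<Longrightarrow> b \<in> Wset N \<Longrightarrow> Wmult a b \<in> Wset N"
  unfolding Wset_def Wmult_def by (auto simp: permutes_compose permutes_not_in)

lemma Winv_Wset: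
  assumes "a \<in> Wset N"
  shows "Winv a \<in> Wset N"
proof -
  obtain w eta where a: "a = (w, eta)" by (cases a)
  have w: "w permutes {1..N}" and eta: "\<forall>j. j \<notin> {1..N} \<longrightarrow> eta j = 0"
    using assms a by (auto simp: Wset_def)
  have "inv w j = j" if "j \<notin> {1..N}" for j
    using permutes_not_in[OF permutes_inv[OF w] that] .
  then show ?thesis using eta permutes_inv[OF w] unfolding a Winv_def Wset_def by auto
qed

lemma Wmult_Winv: "a \<in> Wset N \<Longrightarrow> Wmult a (Winv a) = Wone"
  unfolding Wset_def Winv_def Wmult_def Wone_def by (auto simp: permutes_inv_o permutes_inverses)

lemma Winv_Wmult: "a \<in> Wset N \<Longrightarrow> Wmult (Winv a) a = Wone"
  unfolding Wset_def Winv_def Wmult_def Wone_def by (auto simp: permutes_inv_o permutes_inverses)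

lemma Wpow_induct:
  assumes "Q Wone" "Q a" "Q (Winv a)" "\<And>b c. Q b \<Longrightarrow> Q c \<Longrightarrow> Q (Wmult b c)"
  shows "Q (Wpow a k)"
proof -
  have "Q ((Wmult b ^^ n) Wone)" if "Q b" for b n
    using that by (induction n) (simp_all add: assms(1,4))
  then show ?thesis using assms(2,3) by (simp add: Wpow_def)
qed

lemma Wword_Nil [simp]: "Wword N [] = Wone"
  by (simp add: Wword_def Wprod_def)

lemma Wword_Cons: "Wword N (m # u) = Wmult (sgen N m) (Wword N u)"
  by (simp add: Wword_def Wprod_def)

lemma Wword_append: "Wword N (u @ v) = Wmult (Wword N u) (Wword N v)"
  by (induction u) (simp_all add: Wword_Cons Wmult_assoc)

lemma Wact_root_mult: "Wact_root (Wmult a b) r = Wact_root a (Wact_root b r)"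
  by (cases r) (simp add: Wact_root_def Wmult_def)

lemma Wact_root_Wone [simp]: "Wact_root Wone r = r"
  by (cases r) (simp add: Wact_root_def Wone_def)

lemma Wact_root_Rset:
  assumes "a \<in> Wset N" "r \<in> Rset N"
  shows "Wact_root a r \<in> Rset N"
proof -
  obtain w eta where a: "a = (w, eta)" by (cases a)
  obtain i j k where r: "r = (i, j, k)" by (cases r)
  have w: "w permutes {1..N}" using assms a by (simp add: Wset_def)
  show ?thesis
    using assms permutes_in_image[OF w, of i] permutes_in_image[OF w, of j] permutes_inj[OF w]
    unfolding a r Rset_def Wact_root_def by (auto simp: inj_eq)
qed

lemma Wact_root_inj: "a \<in> Wset N \<Longrightarrow> Wact_root a r = Wact_root a r' \<Longrightarrow> r = r'"
  unfolding Wset_def Wact_root_def by (cases r; cases r') (auto simp: permutes_inj inj_eq)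

lemma Wact_root_Winv: "a \<in> Wset N \<Longrightarrow> Wact_root a (Wact_root (Winv a) r) = r"
  by (metis Wact_root_Wone Wact_root_mult Wmult_Winv)

lemma Winv_Wact_root: "a \<in> Wset N \<Longrightarrow> Wact_root (Winv a) (Wact_root a r) = r"
  by (metis Wact_root_Wone Wact_root_mult Winv_Wmult)

lemma in_Wact_root_image_iff:
  assumes "a \<in> Wset N"
  shows "r \<in> Wact_root a ` S \<longleftrightarrow> Wact_root (Winv a) r \<in> S"
proof
  assume "r \<in> Wact_root a ` S"
  then show "Wact_root (Winv a) r \<in> S" using Winv_Wact_root[OF assms] by auto
next
  assume "Wact_root (Winv a) r \<in> S"
  then show "r \<in> Wact_root a ` S" using Wact_root_Winv[OF assms, of r] by (metis image_eqI)
qed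

lemma Rset_iff: "(i, j, k) \<in> Rset N \<longleftrightarrow> 1 \<le> i \<and> i \<le> N \<and> 1 \<le> j \<and> j \<le> N \<and> i \<noteq> j"
  by (simp add: Rset_def)

lemma Rpos_iff: "(i, j, k) \<in> Rpos N \<longleftrightarrow> (i, j, k) \<in> Rset N \<and> ((i < j \<and> 0 \<le> k) \<or> (j < i \<and> 0 < k))"
  by (simp add: Rpos_def)

lemma Rneg_iff: "(i, j, k) \<in> Rneg N \<longleftrightarrow> (i, j, k) \<in> Rset N \<and> ((i < j \<and> k < 0) \<or> (j < i \<and> k \<le> 0))"
  by (auto simp: Rneg_def Rpos_def Rset_def)

lemma Rpos_Rset: "r \<in> Rpos N \<Longrightarrow> r \<in> Rset N"
  by (auto simp: Rpos_def)

lemma Rneg_Rset: "r \<in> Rneg N \<Longrightarrow> r \<in> Rset N"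
  by (auto simp: Rneg_def)

lemma Rpos_notin_Rneg: "r \<in> Rpos N \<Longrightarrow> r \<notin> Rneg N"
  by (auto simp: Rneg_def)

lemma Rset_cases: "r \<in> Rset N \<Longrightarrow> r \<in> Rpos N \<or> r \<in> Rneg N"
  by (auto simp: Rneg_def)

definition root_neg :: "root \<Rightarrow> root" where
  "root_neg r = (case r of (i, j, k) \<Rightarrow> (j, i, - k))"

lemma Wact_root_root_neg: "Wact_root a (root_neg r) = root_neg (Wact_root a r)"
  by (cases r) (simp add: root_neg_def Wact_root_def)

lemma root_neg_Rpos_iff: "r \<in> Rset N \<Longrightarrow> root_neg r \<in> Rpos N \<longleftrightarrow> r \<in> Rneg N"
  by (cases r) (auto simp: root_neg_def Rset_def Rpos_def Rneg_def)

lemma root_neg_Rneg_iff: "r \<in> Rset N \<Longrightarrow> root_neg r \<in> Rneg N \<longleftrightarrow> r \<in> Rpos N"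
  by (cases r) (auto simp: root_neg_def Rset_def Rpos_def Rneg_def)

lemma s_root_eq: "s_root (p, q, k) = (transpose p q, \<lambda>l. k * (ind p l - ind q l))"
  by (auto simp: s_root_def Wmult_def Wt_def sbar_def ind_def transpose_def fun_eq_iff)

lemma s_root_Wset: "r \<in> Rset N \<Longrightarrow> s_root r \<in> Wset N"
  by (cases r) (auto simp: s_root_eq Wset_def Rset_def ind_def permutes_swap_id)

lemma Wmult_s_root:
  assumes "a \<in> Wset N"
  shows "Wmult a (s_root r) = Wmult (s_root (Wact_root a r)) a"
proof -
  obtain i j k where r: "r = (i, j, k)" by (cases r)
  obtain w eta where a: "a = (w, eta)" by (cases a)
  have inj: "inj w" using assms a by (auto simp: Wset_def permutes_inj)
  have conj: "w \<circ> transpose i j = transpose (w i) (w j) \<circ> w"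
    using inj by (auto simp: fun_eq_iff transpose_def inj_eq)
  show ?thesis
    using inj unfolding r a
    by (auto simp: s_root_eq Wact_root_def Wmult_def conj fun_eq_iff transpose_def ind_def inj_eq algebra_simps)
qed

lemma s_root_root_neg: "s_root (root_neg r) = s_root r"
  by (cases r) (auto simp: root_neg_def s_root_eq transpose_commute fun_eq_iff algebra_simps)

lemma s_root_s_root: "Wmult (s_root r) (s_root r) = Wone"
  by (cases r) (auto simp: s_root_eq Wmult_def Wone_def fun_eq_iff transpose_def ind_def)

section \<open>Simple reflections and the length function\<close>

lemma alpha_simple_Rpos: "2 \<le> N \<Longrightarrow> m < N \<Longrightarrow> alpha_simple N m \<in> Rpos N"
  by (auto simp: alpha_simple_def Rpos_def Rset_def)

lemma alpha_simple_Rset: "2 \<le> N \<Longrightarrow> m < N \<Longrightarrow> alpha_simple N m \<in> Rset N"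
  by (simp add: alpha_simple_Rpos Rpos_Rset)

lemma sgen_Wset: "2 \<le> N \<Longrightarrow> m < N \<Longrightarrow> sgen N m \<in> Wset N"
  by (simp add: sgen_def s_root_Wset alpha_simple_Rset)

lemma Wact_root_sgen: "Wact_root (sgen N m) (a, b, k) = (if m = 0 then
     (transpose N 1 a, transpose N 1 b, k - (ind N a - ind 1 a - ind N b + ind 1 b))
   else (transpose m (Suc m) a, transpose m (Suc m) b, k))"
  by (auto simp: sgen_def alpha_simple_def s_root_eq Wact_root_def algebra_simps)

lemma sgen_sgen: "Wmult (sgen N m) (sgen N m) = Wone"
  by (simp add: sgen_def s_root_s_root)

lemma Wact_root_sgen_sgen: "Wact_root (sgen N m) (Wact_root (sgen N m) r) = r"
  by (metis Wact_root_Wone Wact_root_mult sgen_sgen)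

lemma sgen_Wmult_cancel: "Wmult (sgen N m) (Wmult (sgen N m) a) = a"
  by (simp add: Wmult_assoc[symmetric] sgen_sgen)

lemma Wact_root_sgen_alpha_simple:
  "2 \<le> N \<Longrightarrow> m < N \<Longrightarrow> Wact_root (sgen N m) (alpha_simple N m) = root_neg (alpha_simple N m)"
  by (auto simp: Wact_root_sgen alpha_simple_def root_neg_def transpose_def ind_def)

lemma Wact_root_sgen_Rpos_iff:
  assumes N: "2 \<le> N" and m: "m < N" and r: "r \<in> Rset N"
  shows "Wact_root (sgen N m) r \<in> Rpos N \<longleftrightarrow>
     (r \<in> Rpos N \<and> r \<noteq> alpha_simple N m) \<or> r = root_neg (alpha_simple N m)"
proof -
  obtain a b k where rr: "r = (a, b, k)" by (cases r)
  have ab: "1 \<le> a" "a \<le> N" "1 \<le> b" "b \<le> N" "a \<noteq> b" using r rr by (auto simp: Rset_def)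
  show ?thesis
  proof (cases "m = 0")
    case True
    then show ?thesis using ab N unfolding rr Wact_root_sgen
      by (auto simp: Rpos_def Rset_def transpose_def ind_def alpha_simple_def root_neg_def split: if_splits)
  next
    case False
    then show ?thesis using ab N m unfolding rr Wact_root_sgen
      by (auto simp: Rpos_def Rset_def transpose_def ind_def alpha_simple_def root_neg_def split: if_splits)
  qed
qed

lemma sgen_Wmult_image_iff:
  "r \<in> Wact_root (Wmult (sgen N m) a) ` S \<longleftrightarrow> Wact_root (sgen N m) r \<in> Wact_root a ` S"
proof
  assume "r \<in> Wact_root (Wmult (sgen N m) a) ` S"
  then show "Wact_root (sgen N m) r \<in> Wact_root a ` S" by (auto simp: Wact_root_mult Wact_root_sgen_sgen)
next
  assume "Wact_root (sgen N m) r \<in> Wact_root a ` S"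
  then obtain r' where "r' \<in> S" "Wact_root (sgen N m) r = Wact_root a r'" by auto
  then have "r = Wact_root (Wmult (sgen N m) a) r'" by (metis Wact_root_mult Wact_root_sgen_sgen)
  with \<open>r' \<in> S\<close> show "r \<in> Wact_root (Wmult (sgen N m) a) ` S" by blast
qed

definition inversions :: "nat \<Rightarrow> Welt \<Rightarrow> root set" where
  "inversions N a = {r \<in> Rpos N. Wact_root a r \<in> Rneg N}"

lemma lengthW_eq_card_inversions: "lengthW N a = card (inversions N a)"
  by (simp add: lengthW_def inversions_def)

lemma lengthW_Wone [simp]: "lengthW N Wone = 0"
proof -
  have "inversions N Wone = {}" by (auto simp: inversions_def Rneg_def)
  then show ?thesis by (simp add: lengthW_eq_card_inversions)
qed

lemma finite_inversions:
  assumes "a \<in> Wset N"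
  shows "finite (inversions N a)"
proof -
  obtain w eta where a: "a = (w, eta)" by (cases a)
  define B where "B = (\<Sum>l\<in>{1..N}. \<bar>eta l\<bar>)"
  have eta_le: "\<bar>eta i\<bar> \<le> B" if "i \<in> {1..N}" for i
    unfolding B_def using that by (intro member_le_sum) auto
  have "inversions N a \<subseteq> {1..N} \<times> {1..N} \<times> {- (2 * B)..2 * B}"
  proof
    fix r assume r: "r \<in> inversions N a"
    obtain i j k where rr: "r = (i, j, k)" by (cases r)
    have ij: "i \<in> {1..N}" "j \<in> {1..N}" using r rr by (auto simp: inversions_def Rpos_def Rset_def)
    have "0 \<le> k" "k - (eta i - eta j) \<le> 0"
      using r rr a by (auto simp: inversions_def Rpos_def Rneg_def Rset_def Wact_root_def)
    with eta_le[OF ij(1)] eta_le[OF ij(2)] ij rr show "r \<in> {1..N} \<times> {1..N} \<times> {- (2 * B)..2 * B}"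
      by auto
  qed
  then show ?thesis by (rule finite_subset) auto
qed

lemma inversions_sgen_mult:
  assumes N: "2 \<le> N" and m: "m < N" and a: "a \<in> Wset N"
  shows "inversions N (Wmult (sgen N m) a) =
    {r \<in> Rpos N. Wact_root a r = alpha_simple N m} \<union>
    {r \<in> inversions N a. Wact_root a r \<noteq> root_neg (alpha_simple N m)}"
proof -
  let ?\<alpha> = "alpha_simple N m"
  have ne: "?\<alpha> \<noteq> root_neg ?\<alpha>"
    using alpha_simple_Rpos[OF N m] root_neg_Rneg_iff[OF alpha_simple_Rset[OF N m]]
    by (metis Rpos_notin_Rneg)
  have key: "Wact_root (sgen N m) (Wact_root a r) \<in> Rneg N \<longleftrightarrow>
      (Wact_root a r \<in> Rneg N \<or> Wact_root a r = ?\<alpha>) \<and> Wact_root a r \<noteq> root_neg ?\<alpha>"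
    if "r \<in> Rpos N" for r
  proof -
    have ar: "Wact_root a r \<in> Rset N" using Wact_root_Rset[OF a Rpos_Rset[OF that]] .
    then have "Wact_root (sgen N m) (Wact_root a r) \<in> Rset N"
      using Wact_root_Rset[OF sgen_Wset[OF N m]] by blast
    then show ?thesis
      using Wact_root_sgen_Rpos_iff[OF N m ar] ar Rset_cases Rpos_notin_Rneg by blast
  qed
  have "r \<in> inversions N (Wmult (sgen N m) a) \<longleftrightarrow>
      r \<in> {r \<in> Rpos N. Wact_root a r = ?\<alpha>} \<union> {r \<in> inversions N a. Wact_root a r \<noteq> root_neg ?\<alpha>}"
    for r
  proof (cases "r \<in> Rpos N")
    case True
    then show ?thesis using key[OF True] ne by (auto simp: inversions_def Wact_root_mult)
  qed (simp add: inversions_def)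
  then show ?thesis by blast
qed

lemma lengthW_sgen_mult_Rpos:
  assumes N: "2 \<le> N" and m: "m < N" and a: "a \<in> Wset N"
    and "alpha_simple N m \<in> Wact_root a ` Rpos N"
  shows "lengthW N (Wmult (sgen N m) a) = lengthW N a + 1"
proof -
  let ?\<alpha> = "alpha_simple N m"
  obtain r0 where r0: "r0 \<in> Rpos N" "Wact_root a r0 = ?\<alpha>" using assms(4) by auto
  have "Wact_root a r \<noteq> root_neg ?\<alpha>" if "r \<in> Rpos N" for r
    using that r0 Wact_root_inj[OF a, of r "root_neg r0"] root_neg_Rpos_iff[OF Rpos_Rset[OF r0(1)]]
    by (metis Wact_root_root_neg Rpos_notin_Rneg)
  moreover have "Wact_root a r = ?\<alpha> \<longleftrightarrow> r = r0" for r
    using r0(2) Wact_root_inj[OF a] by metis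
  ultimately have "inversions N (Wmult (sgen N m) a) = insert r0 (inversions N a)"
    unfolding inversions_sgen_mult[OF N m a] using r0(1) by (auto simp: inversions_def)
  moreover have "r0 \<notin> inversions N a"
    using r0 alpha_simple_Rpos[OF N m] Rpos_notin_Rneg by (auto simp: inversions_def)
  ultimately show ?thesis
    using finite_inversions[OF a] by (simp add: lengthW_eq_card_inversions)
qed

lemma lengthW_sgen_mult_Rneg:
  assumes N: "2 \<le> N" and m: "m < N" and a: "a \<in> Wset N"
    and "alpha_simple N m \<in> Wact_root a ` Rneg N"
  shows "lengthW N (Wmult (sgen N m) a) + 1 = lengthW N a"
proof -
  let ?\<alpha> = "alpha_simple N m"
  obtain r0 where r0: "r0 \<in> Rneg N" "Wact_root a r0 = ?\<alpha>" using assms(4) by auto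
  have neg_r0: "Wact_root a (root_neg r0) = root_neg ?\<alpha>"
    using r0 by (simp add: Wact_root_root_neg)
  have "Wact_root a r = ?\<alpha> \<longleftrightarrow> r = r0" for r
    using r0(2) Wact_root_inj[OF a] by metis
  then have "{r \<in> Rpos N. Wact_root a r = ?\<alpha>} = {}"
    using r0(1) Rpos_notin_Rneg[of r0 N] by auto
  moreover have "Wact_root a r = root_neg ?\<alpha> \<longleftrightarrow> r = root_neg r0" for r
    using neg_r0 Wact_root_inj[OF a] by metis
  ultimately have "inversions N (Wmult (sgen N m) a) = inversions N a - {root_neg r0}"
    unfolding inversions_sgen_mult[OF N m a] by auto
  moreover have "root_neg r0 \<in> inversions N a"
    using r0 neg_r0 root_neg_Rpos_iff[OF Rneg_Rset] root_neg_Rneg_iff alpha_simple_Rpos[OF N m]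
      alpha_simple_Rset[OF N m]
    by (auto simp: inversions_def)
  ultimately show ?thesis
    using card_Suc_Diff1[OF finite_inversions[OF a]] by (simp add: lengthW_eq_card_inversions)
qed

lemma alpha_simple_image_cases:
  assumes N: "2 \<le> N" and m: "m < N" and a: "a \<in> Wset N"
  shows "alpha_simple N m \<in> Wact_root a ` Rpos N \<or> alpha_simple N m \<in> Wact_root a ` Rneg N"
proof -
  have "Wact_root (Winv a) (alpha_simple N m) \<in> Rset N"
    using Wact_root_Rset[OF Winv_Wset[OF a] alpha_simple_Rset[OF N m]] .
  then show ?thesis using Rset_cases in_Wact_root_image_iff[OF a] by blast
qed

lemma lengthW_sgen_mult_le:
  assumes "2 \<le> N" "m < N" "a \<in> Wset N"
  shows "lengthW N (Wmult (sgen N m) a) \<le> lengthW N a + 1"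
    and "lengthW N a \<le> lengthW N (Wmult (sgen N m) a) + 1"
  using lengthW_sgen_mult_Rpos[OF assms] lengthW_sgen_mult_Rneg[OF assms] alpha_simple_image_cases[OF assms]
  by force+

lemma Wword_Wset: "2 \<le> N \<Longrightarrow> set u \<subseteq> {..<N} \<Longrightarrow> Wword N u \<in> Wset N"
  by (induction u) (auto simp: Wword_Cons Wmult_Wset sgen_Wset)

lemma lengthW_Wword_le: "2 \<le> N \<Longrightarrow> set u \<subseteq> {..<N} \<Longrightarrow> lengthW N (Wword N u) \<le> length u"
proof (induction u)
  case (Cons m u)
  then show ?case
    using lengthW_sgen_mult_le(1)[of N m "Wword N u"] Wword_Wset[of N u] by (auto simp: Wword_Cons)
qed simp

section \<open>The rotation \<open>\<pi>\<close> and diagram automorphisms\<close>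

definition cyclic_succ :: "nat \<Rightarrow> nat \<Rightarrow> nat" where
  "cyclic_succ N x = (if 1 \<le> x \<and> x < N then Suc x else if x = N then 1 else x)"

lemma sgen_eq_transpose: "1 \<le> m \<Longrightarrow> sgen N m = (transpose m (Suc m), \<lambda>_. 0)"
  by (simp add: sgen_def alpha_simple_def s_root_eq)

lemma Wword_upt_eq_cycle:
  assumes "1 \<le> a" "a \<le> N"
  shows "Wword N [a..<N] = (\<lambda>x. if a \<le> x \<and> x < N then Suc x else if x = N then a else x, \<lambda>_. 0)"
  using assms
proof (induction "N - a" arbitrary: a)
  case 0
  then show ?case by (auto simp: Wone_def fun_eq_iff)
next
  case (Suc d)
  then have aN: "a < N" by simp
  have "transpose a (Suc a) \<circ> (\<lambda>x. if Suc a \<le> x \<and> x < N then Suc x else if x = N then Suc a else x) =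
     (\<lambda>x. if a \<le> x \<and> x < N then Suc x else if x = N then a else x)"
  proof
    fix x
    show "(transpose a (Suc a) \<circ> (\<lambda>x. if Suc a \<le> x \<and> x < N then Suc x else if x = N then Suc a else x)) x =
          (if a \<le> x \<and> x < N then Suc x else if x = N then a else x)"
      using aN by (cases "x = a"; cases "x = N"; cases "x < a"; simp add: transpose_def)
  qed
  with Suc aN show ?case
    by (simp add: upt_conv_Cons Wword_Cons sgen_eq_transpose Wmult_def)
qed

lemma piW_eq: "2 \<le> N \<Longrightarrow> piW N = (cyclic_succ N, ind N)"
  using Wword_upt_eq_cycle[of 1 N]
  by (auto simp: piW_def Wword_def Wmult_def Wt_def cyclic_succ_def ind_def fun_eq_iff)

lemma piW_Wset: "2 \<le> N \<Longrightarrow> piW N \<in> Wset N"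
proof -
  assume N: "2 \<le> N"
  then have "Wword N [1..<N] \<in> Wset N" by (intro Wword_Wset) auto
  moreover have "Wt (ind 1) \<in> Wset N" using N by (auto simp: Wt_def Wset_def ind_def)
  ultimately show ?thesis unfolding piW_def Wword_def by (metis Wmult_Wset)
qed

lemma Wact_root_piW:
  "2 \<le> N \<Longrightarrow> Wact_root (piW N) (a, b, k) = (cyclic_succ N a, cyclic_succ N b, k - (ind N a - ind N b))"
  by (simp add: piW_eq Wact_root_def)

definition simple_roots :: "nat \<Rightarrow> root set" where
  "simple_roots N = alpha_simple N ` {..<N}"

definition diagram_aut :: "nat \<Rightarrow> Welt \<Rightarrow> bool" where
  "diagram_aut N p \<longleftrightarrow> p \<in> Wset N \<and> (\<forall>r\<in>Rset N. Wact_root p r \<in> Rpos N \<longleftrightarrow> r \<in> Rpos N) \<and>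
     Wact_root p ` simple_roots N = simple_roots N"

lemma diagram_aut_Wone: "diagram_aut N Wone"
  by (auto simp: diagram_aut_def)

lemma diagram_aut_Wmult:
  assumes p: "diagram_aut N p" and q: "diagram_aut N q"
  shows "diagram_aut N (Wmult p q)"
proof -
  have "Wact_root p (Wact_root q r) \<in> Rpos N \<longleftrightarrow> r \<in> Rpos N" if "r \<in> Rset N" for r
  proof -
    have "Wact_root q r \<in> Rset N" using Wact_root_Rset[OF _ that] q by (simp add: diagram_aut_def)
    then show ?thesis using p q that by (simp add: diagram_aut_def)
  qed
  moreover have "Wact_root (Wmult p q) ` simple_roots N = Wact_root p ` Wact_root q ` simple_roots N"
    by (simp add: image_image Wact_root_mult)
  ultimately show ?thesis
    using p q by (simp add: diagram_aut_def Wmult_Wset Wact_root_mult)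
qed

lemma diagram_aut_Winv:
  assumes "diagram_aut N p"
  shows "diagram_aut N (Winv p)"
proof -
  have p: "p \<in> Wset N" using assms by (simp add: diagram_aut_def)
  have "Wact_root (Winv p) r \<in> Rpos N \<longleftrightarrow> r \<in> Rpos N" if "r \<in> Rset N" for r
  proof -
    have "Wact_root (Winv p) r \<in> Rset N" using Wact_root_Rset[OF Winv_Wset[OF p] that] .
    then show ?thesis using assms Wact_root_Winv[OF p, of r] unfolding diagram_aut_def by auto
  qed
  moreover have "Wact_root (Winv p) ` simple_roots N = simple_roots N"
  proof -
    have "Wact_root (Winv p) ` (Wact_root p ` simple_roots N) = simple_roots N"
      by (simp add: image_comp comp_def Winv_Wact_root[OF p])
    then show ?thesis using assms by (simp add: diagram_aut_def)
  qed
  ultimately show ?thesis using Winv_Wset[OF p] by (simp add: diagram_aut_def)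
qed

lemma diagram_aut_piW:
  assumes N: "2 \<le> N"
  shows "diagram_aut N (piW N)"
proof -
  have "Wact_root (piW N) r \<in> Rpos N \<longleftrightarrow> r \<in> Rpos N" if "r \<in> Rset N" for r
  proof -
    obtain a b k where r: "r = (a, b, k)" by (cases r)
    show ?thesis using that N unfolding r Wact_root_piW[OF N]
      by (auto simp: Rset_def Rpos_def cyclic_succ_def ind_def split: if_splits)
  qed
  moreover have "Wact_root (piW N) ` simple_roots N = simple_roots N"
  proof
    show "Wact_root (piW N) ` simple_roots N \<subseteq> simple_roots N"
    proof (clarsimp simp: simple_roots_def)
      fix m assume "m < N"
      with N have "Wact_root (piW N) (alpha_simple N m) = alpha_simple N (if Suc m = N then 0 else Suc m)"
        by (auto simp: Wact_root_piW alpha_simple_def cyclic_succ_def ind_def)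
      with \<open>m < N\<close> N show "Wact_root (piW N) (alpha_simple N m) \<in> alpha_simple N ` {..<N}"
        by auto
    qed
    show "simple_roots N \<subseteq> Wact_root (piW N) ` simple_roots N"
    proof (clarsimp simp: simple_roots_def)
      fix m assume "m < N"
      with N have "alpha_simple N m = Wact_root (piW N) (alpha_simple N (if m = 0 then N - 1 else m - 1))"
        by (auto simp: Wact_root_piW alpha_simple_def cyclic_succ_def ind_def)
      with \<open>m < N\<close> N show "alpha_simple N m \<in> Wact_root (piW N) ` alpha_simple N ` {..<N}"
        by auto
    qed
  qed
  ultimately show ?thesis using piW_Wset[OF N] by (simp add: diagram_aut_def)
qed

lemma diagram_aut_Wpow_piW: "2 \<le> N \<Longrightarrow> diagram_aut N (Wpow (piW N) k)"
  by (rule Wpow_induct) (simp_all add: diagram_aut_Wone diagram_aut_Wmult diagram_aut_Winv diagram_aut_piW)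

lemma lengthW_diagram_aut_mult:
  assumes p: "diagram_aut N p" and a: "a \<in> Wset N"
  shows "lengthW N (Wmult p a) = lengthW N a"
proof -
  have "Wact_root p (Wact_root a r) \<in> Rneg N \<longleftrightarrow> Wact_root a r \<in> Rneg N" if "r \<in> Rpos N" for r
  proof -
    have ar: "Wact_root a r \<in> Rset N" using Wact_root_Rset[OF a Rpos_Rset[OF that]] .
    moreover have "Wact_root p (Wact_root a r) \<in> Rset N"
      using Wact_root_Rset[OF _ ar] p by (simp add: diagram_aut_def)
    ultimately show ?thesis using p unfolding diagram_aut_def Rneg_def by auto
  qed
  then have "inversions N (Wmult p a) = inversions N a" by (auto simp: inversions_def Wact_root_mult)
  then show ?thesis by (simp add: lengthW_eq_card_inversions)
qed

section \<open>Braid relations in \<open>W\<close>\<close>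

definition adjacent :: "nat \<Rightarrow> nat \<Rightarrow> nat \<Rightarrow> bool" where
  "adjacent N s t \<longleftrightarrow> (1 \<le> s \<and> 1 \<le> t \<and> (t = Suc s \<or> s = Suc t)) \<or> (s = 0 \<and> (t = 1 \<or> t = N - 1))
     \<or> (t = 0 \<and> (s = 1 \<or> s = N - 1))"

definition root_sum :: "root \<Rightarrow> root \<Rightarrow> root \<Rightarrow> bool" where
  "root_sum a b c \<longleftrightarrow> (\<exists>p q r k1 k2. p \<noteq> r \<and>
     ((a = (p, q, k1) \<and> b = (q, r, k2)) \<or> (b = (p, q, k1) \<and> a = (q, r, k2))) \<and> c = (p, r, k1 + k2))"

definition braid_pair :: "nat \<Rightarrow> nat \<Rightarrow> nat \<Rightarrow> bool" where
  "braid_pair N s t \<longleftrightarrow>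
     Wact_root (sgen N t) (alpha_simple N s) = Wact_root (sgen N s) (alpha_simple N t) \<and>
     root_sum (alpha_simple N s) (alpha_simple N t) (Wact_root (sgen N s) (alpha_simple N t))"

lemma braid_pair_sym: "braid_pair N s t \<Longrightarrow> braid_pair N t s"
  unfolding braid_pair_def root_sum_def by metis

lemma braid_pair_Suc: "1 \<le> s \<Longrightarrow> Suc s < N \<Longrightarrow> braid_pair N s (Suc s)"
  unfolding braid_pair_def root_sum_def
  by (intro conjI exI[of _ s] exI[of _ "Suc s"] exI[of _ "Suc (Suc s)"] exI[of _ 0] exI[of _ 0])
     (simp_all add: Wact_root_sgen alpha_simple_def transpose_def)

lemma braid_pair_0_1: "3 \<le> N \<Longrightarrow> braid_pair N 0 1"
  unfolding braid_pair_def root_sum_def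
  by (intro conjI exI[of _ N] exI[of _ 1] exI[of _ 2] exI[of _ 1] exI[of _ 0])
     (simp_all add: Wact_root_sgen alpha_simple_def transpose_def ind_def)

lemma braid_pair_0_last: "3 \<le> N \<Longrightarrow> braid_pair N 0 (N - 1)"
proof -
  assume "3 \<le> N"
  then have "\<exists>n. N = Suc (Suc (Suc n))" by presburger
  then obtain n where N: "N = Suc (Suc (Suc n))" by blast
  show ?thesis
    unfolding braid_pair_def root_sum_def N
    by (intro conjI exI[of _ "Suc (Suc n)"] exI[of _ "Suc (Suc (Suc n))"] exI[of _ 1] exI[of _ 0] exI[of _ 1])
       (simp_all add: Wact_root_sgen alpha_simple_def transpose_def ind_def)
qed

lemma adjacent_braid_pair:
  assumes N: "3 \<le> N" and s: "s < N" and t: "t < N" and "adjacent N s t"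
  shows "braid_pair N s t"
  using assms(4) unfolding adjacent_def
proof (elim disjE conjE)
  assume "1 \<le> s" "t = Suc s" then show ?thesis using braid_pair_Suc t by simp
next
  assume "1 \<le> t" "s = Suc t" then show ?thesis using braid_pair_Suc[of t N] braid_pair_sym s by simp
next
  assume "s = 0" "t = 1" then show ?thesis using braid_pair_0_1 N by simp
next
  assume "s = 0" "t = N - 1" then show ?thesis using braid_pair_0_last N by simp
next
  assume "t = 0" "s = 1" then show ?thesis using braid_pair_0_1 N braid_pair_sym by simp
next
  assume "t = 0" "s = N - 1" then show ?thesis using braid_pair_0_last N braid_pair_sym by simp
qed

lemma Wact_root_sgen_nonadjacent:
  assumes s: "s < N" and t: "t < N" and st: "s \<noteq> t" and na: "\<not> adjacent N s t"
  shows "Wact_root (sgen N s) (alpha_simple N t) = alpha_simple N t"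
proof (cases "s = 0")
  case True
  then have "t \<noteq> 0" "t \<noteq> 1" "Suc t \<noteq> N" "t \<noteq> N" using na st t by (auto simp: adjacent_def)
  then show ?thesis using True by (simp add: Wact_root_sgen alpha_simple_def transpose_def ind_def)
next
  case False
  show ?thesis
  proof (cases "t = 0")
    case True
    then have "s \<noteq> 1" "Suc s \<noteq> N" "s \<noteq> N" "Suc s \<noteq> 1" using na st s False by (auto simp: adjacent_def)
    then show ?thesis using True False by (simp add: Wact_root_sgen alpha_simple_def transpose_def)
  next
    case t_pos: False
    then have "t \<noteq> Suc s" "s \<noteq> Suc t" "s \<noteq> t" using na st False by (auto simp: adjacent_def)
    then show ?thesis using t_pos False by (simp add: Wact_root_sgen alpha_simple_def transpose_def)
  qed
qed

lemma simple_pair_cases: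
  assumes N: "2 \<le> N" and s: "s < N" and t: "t < N" and st: "s \<noteq> t"
  obtains "N = 2"
    | "Wact_root (sgen N s) (alpha_simple N t) = alpha_simple N t"
      "Wact_root (sgen N t) (alpha_simple N s) = alpha_simple N s"
    | "braid_pair N s t"
proof (cases "N = 2")
  case False
  then have N3: "3 \<le> N" using N by simp
  show ?thesis
  proof (cases "adjacent N s t")
    case True
    then show ?thesis using that(3) adjacent_braid_pair[OF N3 s t] by blast
  next
    case False
    moreover from False have "\<not> adjacent N t s" by (auto simp: adjacent_def)
    ultimately show ?thesis
      using that(2) Wact_root_sgen_nonadjacent[OF s t st] Wact_root_sgen_nonadjacent[OF t s st[symmetric]]
      by blast
  qed
qed (use that in blast)

lemma sgen_commute:
  assumes N: "2 \<le> N" and s: "s < N" and "Wact_root (sgen N s) (alpha_simple N t) = alpha_simple N t"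
  shows "Wmult (sgen N s) (sgen N t) = Wmult (sgen N t) (sgen N s)"
  using Wmult_s_root[OF sgen_Wset[OF N s], of "alpha_simple N t"] assms(3) by (simp add: sgen_def)

lemma sgen_conj_sgen:
  assumes N: "2 \<le> N" and s: "s < N"
  shows "Wmult (sgen N s) (Wmult (sgen N t) (sgen N s)) = s_root (Wact_root (sgen N s) (alpha_simple N t))"
proof -
  have "Wmult (sgen N s) (Wmult (sgen N t) (sgen N s)) = Wmult (Wmult (sgen N s) (s_root (alpha_simple N t))) (sgen N s)"
    by (simp add: Wmult_assoc sgen_def)
  also have "\<dots> = s_root (Wact_root (sgen N s) (alpha_simple N t))"
    using Wmult_s_root[OF sgen_Wset[OF N s], of "alpha_simple N t"] by (simp add: Wmult_assoc sgen_sgen)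
  finally show ?thesis .
qed

lemma sgen_braid:
  assumes N: "2 \<le> N" and s: "s < N" and t: "t < N" and "braid_pair N s t"
  shows "Wmult (sgen N s) (Wmult (sgen N t) (sgen N s)) = Wmult (sgen N t) (Wmult (sgen N s) (sgen N t))"
  using assms(4) by (simp add: sgen_conj_sgen[OF N s] sgen_conj_sgen[OF N t] braid_pair_def)

section \<open>The exchange condition and Matsumoto's theorem\<close>

lemma root_sum_chain: "p \<noteq> r \<Longrightarrow> root_sum (p, q, k1) (q, r, k2) (p, r, k1 + k2)"
  unfolding root_sum_def by blast

lemma root_sum_Wact_root:
  assumes y: "y \<in> Wset N" and "root_sum a b c"
  shows "root_sum (Wact_root y a) (Wact_root y b) (Wact_root y c)"
proof -
  obtain w eta where yy: "y = (w, eta)" by (cases y)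
  have "inj w" using y yy by (auto simp: Wset_def permutes_inj)
  from assms(2) obtain p q r k1 k2 where "p \<noteq> r" "c = (p, r, k1 + k2)"
    and "(a = (p, q, k1) \<and> b = (q, r, k2)) \<or> (b = (p, q, k1) \<and> a = (q, r, k2))"
    unfolding root_sum_def by blast
  with \<open>inj w\<close> show ?thesis
    unfolding root_sum_def yy Wact_root_def
    by (intro exI[of _ "w p"] exI[of _ "w q"] exI[of _ "w r"] exI[of _ "k1 - (eta p - eta q)"]
        exI[of _ "k2 - (eta q - eta r)"]) (auto simp: inj_eq)
qed

lemma root_sum_Rneg: "root_sum a b c \<Longrightarrow> a \<in> Rneg N \<Longrightarrow> b \<in> Rneg N \<Longrightarrow> c \<in> Rset N \<Longrightarrow> c \<in> Rneg N"
  unfolding root_sum_def by (auto simp: Rneg_iff Rset_iff)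

lemma root_sum_Rpos: "root_sum a b c \<Longrightarrow> a \<in> Rpos N \<Longrightarrow> b \<in> Rpos N \<Longrightarrow> c \<in> Rset N \<Longrightarrow> c \<in> Rpos N"
  unfolding root_sum_def by (auto simp: Rpos_iff Rset_iff)

lemma root_sum_Rpos_not_alpha_simple:
  "root_sum a b c \<Longrightarrow> a \<in> Rpos N \<Longrightarrow> b \<in> Rpos N \<Longrightarrow> c \<noteq> alpha_simple N m"
  unfolding root_sum_def by (auto simp: alpha_simple_def Rpos_iff Rset_iff)

lemma root_sum_in_image_Rneg:
  assumes x: "x \<in> Wset N" and "root_sum a b c" "c \<in> Rset N"
    and "a \<in> Wact_root x ` Rneg N" "b \<in> Wact_root x ` Rneg N"
  shows "c \<in> Wact_root x ` Rneg N"
  using assms root_sum_Rneg[OF root_sum_Wact_root[OF Winv_Wset[OF x]]] Wact_root_Rset[OF Winv_Wset[OF x]]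
  unfolding in_Wact_root_image_iff[OF x] by blast

text \<open>For \<open>N = 2\<close> the group \<open>W\<close> is an infinite dihedral group and \<open>s\<^sub>0, s\<^sub>1\<close> satisfy no braid
  relation; instead they can never both be left descents.\<close>
lemma not_both_descents_2:
  assumes N: "N = 2" and x: "x \<in> Wset N" and st: "s < N" "t < N" "s \<noteq> t"
    and "alpha_simple N s \<in> Wact_root x ` Rneg N" "alpha_simple N t \<in> Wact_root x ` Rneg N"
  shows False
proof -
  obtain w eta where y: "Winv x = (w, eta)" by (cases "Winv x")
  have "{s, t} = {0, 1}" using st N by auto
  then have "Wact_root (Winv x) (2, 1, 1) \<in> Rneg 2" "Wact_root (Winv x) (1, 2, 0) \<in> Rneg 2"
    using assms(6,7) in_Wact_root_image_iff[OF x] unfolding N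
    by (auto simp: alpha_simple_def numeral_2_eq_2 doubleton_eq_iff)
  then have "(w 2, w 1, 1 - (eta 2 - eta 1)) \<in> Rneg 2" "(w 1, w 2, 0 - (eta 1 - eta 2)) \<in> Rneg 2"
    unfolding y by (auto simp: Wact_root_def)
  then show False unfolding Rneg_iff by linarith
qed

lemma exchange_condition:
  assumes N: "2 \<le> N"
  shows "set u \<subseteq> {..<N} \<Longrightarrow> \<gamma> \<in> Rpos N \<Longrightarrow> \<gamma> \<in> Wact_root (Wword N u) ` Rneg N \<Longrightarrow>
    \<exists>u'. length u' + 1 = length u \<and> set u' \<subseteq> set u \<and> Wmult (s_root \<gamma>) (Wword N u) = Wword N u'"
proof (induction u arbitrary: \<gamma>)
  case Nil
  then show ?case using Rpos_notin_Rneg[of \<gamma> N] by auto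
next
  case (Cons m u)
  have m: "m < N" and u: "set u \<subseteq> {..<N}" using Cons.prems(1) by auto
  show ?case
  proof (cases "\<gamma> = alpha_simple N m")
    case True
    then have "Wmult (s_root \<gamma>) (Wword N (m # u)) = Wword N u"
      by (simp add: Wword_Cons sgen_def[symmetric] sgen_Wmult_cancel)
    then show ?thesis by (intro exI[of _ u]) auto
  next
    case False
    let ?\<gamma>' = "Wact_root (sgen N m) \<gamma>"
    have "?\<gamma>' \<in> Rpos N"
      using Wact_root_sgen_Rpos_iff[OF N m Rpos_Rset[OF Cons.prems(2)]] Cons.prems(2) False by blast
    moreover have "?\<gamma>' \<in> Wact_root (Wword N u) ` Rneg N"
      using Cons.prems(3) sgen_Wmult_image_iff by (simp add: Wword_Cons)
    ultimately obtain u' where u': "length u' + 1 = length u" "set u' \<subseteq> set u"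
      "Wmult (s_root ?\<gamma>') (Wword N u) = Wword N u'"
      using Cons.IH[OF u] by blast
    have "Wmult (sgen N m) (s_root ?\<gamma>') = Wmult (s_root \<gamma>) (sgen N m)"
      using Wmult_s_root[OF sgen_Wset[OF N m], of ?\<gamma>'] by (simp add: Wact_root_sgen_sgen)
    then have "Wmult (s_root \<gamma>) (Wword N (m # u)) = Wword N (m # u')"
      by (simp add: Wword_Cons u'(3)[symmetric] Wmult_assoc[symmetric])
    then show ?thesis using u' by (intro exI[of _ "m # u'"]) auto
  qed
qed

definition reduced_word :: "nat \<Rightarrow> nat list \<Rightarrow> bool" where
  "reduced_word N u \<longleftrightarrow> set u \<subseteq> {..<N} \<and> lengthW N (Wword N u) = length u"

lemma reduced_word_Wset: "2 \<le> N \<Longrightarrow> reduced_word N u \<Longrightarrow> Wword N u \<in> Wset N"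
  by (simp add: reduced_word_def Wword_Wset)

lemma reduced_word_Cons_descent:
  assumes N: "2 \<le> N" and r: "reduced_word N (s # u)"
  shows "alpha_simple N s \<in> Wact_root (Wword N (s # u)) ` Rneg N"
proof (rule ccontr)
  assume "alpha_simple N s \<notin> Wact_root (Wword N (s # u)) ` Rneg N"
  moreover have s: "s < N" and u: "set u \<subseteq> {..<N}" using r by (auto simp: reduced_word_def)
  moreover have x: "Wword N (s # u) \<in> Wset N" using reduced_word_Wset[OF N r] .
  ultimately have "lengthW N (Wmult (sgen N s) (Wword N (s # u))) = lengthW N (Wword N (s # u)) + 1"
    using alpha_simple_image_cases[OF N s x] lengthW_sgen_mult_Rpos[OF N s x] by blast
  then show False
    using lengthW_Wword_le[OF N u] r by (simp add: reduced_word_def Wword_Cons sgen_Wmult_cancel)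
qed

lemma reduced_word_tl:
  assumes N: "2 \<le> N" and r: "reduced_word N (s # u)"
  shows "reduced_word N u"
proof -
  have s: "s < N" and u: "set u \<subseteq> {..<N}" using r by (auto simp: reduced_word_def)
  then have "lengthW N (Wword N (s # u)) \<le> lengthW N (Wword N u) + 1"
    using lengthW_sgen_mult_le(1)[OF N s Wword_Wset[OF N u]] by (simp add: Wword_Cons)
  then show ?thesis using lengthW_Wword_le[OF N u] r u by (simp add: reduced_word_def)
qed

lemma reduced_word_exchange:
  assumes N: "2 \<le> N" and r: "reduced_word N u" and t: "t < N"
    and "alpha_simple N t \<in> Wact_root (Wword N u) ` Rneg N"
  obtains u' where "reduced_word N (t # u')" "Wword N (t # u') = Wword N u" "length u' + 1 = length u"
proof -
  have u: "set u \<subseteq> {..<N}" using r by (simp add: reduced_word_def)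
  obtain u' where u': "length u' + 1 = length u" "set u' \<subseteq> set u"
    "Wmult (sgen N t) (Wword N u) = Wword N u'"
    using exchange_condition[OF N u alpha_simple_Rpos[OF N t] assms(4)] by (auto simp: sgen_def)
  have "Wword N (t # u') = Wword N u"
    by (simp add: Wword_Cons u'(3)[symmetric] sgen_Wmult_cancel)
  with u' r u t show ?thesis by (intro that) (auto simp: reduced_word_def)
qed

definition reduced_words_agree :: "nat \<Rightarrow> (nat \<Rightarrow> 'b::monoid_mult) \<Rightarrow> nat \<Rightarrow> bool" where
  "reduced_words_agree N \<phi> n \<longleftrightarrow> (\<forall>u v. length u < n \<longrightarrow> reduced_word N u \<longrightarrow> reduced_word N v \<longrightarrow>
     Wword N u = Wword N v \<longrightarrow> prod_list (map \<phi> u) = prod_list (map \<phi> v))"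

lemma reduced_words_agreeD:
  "reduced_words_agree N \<phi> n \<Longrightarrow> length u < n \<Longrightarrow> reduced_word N u \<Longrightarrow> reduced_word N v \<Longrightarrow>
     Wword N u = Wword N v \<Longrightarrow> prod_list (map \<phi> u) = prod_list (map \<phi> v)"
  unfolding reduced_words_agree_def by blast

lemma reduced_words_agree_mono:
  "reduced_words_agree N \<phi> n \<Longrightarrow> m \<le> n \<Longrightarrow> reduced_words_agree N \<phi> m"
  unfolding reduced_words_agree_def by auto

lemma prod_list_peel_descent:
  assumes N: "2 \<le> N" and agree: "reduced_words_agree N \<phi> (Suc (length u))"
    and r: "reduced_word N u" and t: "t < N"
    and descent: "alpha_simple N t \<in> Wact_root (Wword N u) ` Rneg N"
  obtains u' where "reduced_word N u'" "length u' + 1 = length u"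
    "Wword N u' = Wmult (sgen N t) (Wword N u)" "prod_list (map \<phi> u) = \<phi> t * prod_list (map \<phi> u')"
proof -
  obtain u' where u': "reduced_word N (t # u')" "Wword N (t # u') = Wword N u" "length u' + 1 = length u"
    using reduced_word_exchange[OF N r t descent] .
  show ?thesis
  proof
    show "reduced_word N u'" using reduced_word_tl[OF N u'(1)] .
    show "Wword N u' = Wmult (sgen N t) (Wword N u)"
      using u'(2) by (simp add: Wword_Cons sgen_Wmult_cancel flip: u'(2))
    show "prod_list (map \<phi> u) = \<phi> t * prod_list (map \<phi> u')"
      using reduced_words_agreeD[OF agree _ r u'(1) u'(2)[symmetric]] by simp
  qed (use u' in simp)
qed

lemma prod_list_peel_commuting:
  assumes N: "2 \<le> N" and agree: "reduced_words_agree N \<phi> (length (s # u))"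
    and r: "reduced_word N (s # u)" and t: "t < N"
    and fix_t: "Wact_root (sgen N s) (alpha_simple N t) = alpha_simple N t"
    and descent: "alpha_simple N t \<in> Wact_root (Wword N (s # u)) ` Rneg N"
  obtains u' where "reduced_word N u'" "length u' + 2 = length (s # u)"
    "Wword N u' = Wmult (sgen N t) (Wmult (sgen N s) (Wword N (s # u)))"
    "prod_list (map \<phi> (s # u)) = \<phi> s * (\<phi> t * prod_list (map \<phi> u'))"
proof -
  have "alpha_simple N t \<in> Wact_root (Wword N u) ` Rneg N"
    using descent fix_t sgen_Wmult_image_iff[of "alpha_simple N t" N s "Wword N (s # u)"]
    by (simp add: Wword_Cons sgen_Wmult_cancel)
  moreover have "reduced_words_agree N \<phi> (Suc (length u))" using agree by simp
  ultimately obtain u' where u': "reduced_word N u'" "length u' + 1 = length u"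
      "Wword N u' = Wmult (sgen N t) (Wword N u)" "prod_list (map \<phi> u) = \<phi> t * prod_list (map \<phi> u')"
    using prod_list_peel_descent[OF N _ reduced_word_tl[OF N r] t] by blast
  then show ?thesis by (intro that) (auto simp: Wword_Cons sgen_Wmult_cancel)
qed

lemma prod_list_peel_braid:
  assumes N: "2 \<le> N" and agree: "reduced_words_agree N \<phi> (length (s # u))"
    and r: "reduced_word N (s # u)" and s: "s < N" and t: "t < N" and braid: "braid_pair N s t"
    and descent_s: "alpha_simple N s \<in> Wact_root (Wword N (s # u)) ` Rneg N"
    and descent_t: "alpha_simple N t \<in> Wact_root (Wword N (s # u)) ` Rneg N"
  obtains u' where "reduced_word N u'" "length u' + 3 = length (s # u)"
    "Wword N u' = Wmult (sgen N s) (Wmult (sgen N t) (Wmult (sgen N s) (Wword N (s # u))))"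
    "prod_list (map \<phi> (s # u)) = \<phi> s * (\<phi> t * (\<phi> s * prod_list (map \<phi> u')))"
proof -
  let ?x = "Wword N (s # u)" and ?\<gamma> = "Wact_root (sgen N s) (alpha_simple N t)"
  have x: "?x \<in> Wset N" using reduced_word_Wset[OF N r] .
  have \<gamma>: "Wact_root (sgen N t) (alpha_simple N s) = ?\<gamma>" "root_sum (alpha_simple N s) (alpha_simple N t) ?\<gamma>"
    using braid by (auto simp: braid_pair_def)
  txt \<open>The root \<open>\<gamma> = \<alpha>\<^sub>s + \<alpha>\<^sub>t\<close> is a descent of \<open>x\<close> as well, so \<open>\<alpha>\<^sub>t = s\<^sub>s \<gamma>\<close> is one of \<open>s\<^sub>s x\<close>.\<close>
  have "?\<gamma> \<in> Wact_root ?x ` Rneg N"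
    using root_sum_in_image_Rneg[OF x \<gamma>(2) _ descent_s descent_t]
      Wact_root_Rset[OF sgen_Wset[OF N s] alpha_simple_Rset[OF N t]] by blast
  then have "alpha_simple N t \<in> Wact_root (Wword N u) ` Rneg N"
    using sgen_Wmult_image_iff[of "alpha_simple N t" N s ?x] by (simp add: Wword_Cons sgen_Wmult_cancel)
  moreover have "reduced_words_agree N \<phi> (Suc (length u))" using agree by simp
  ultimately obtain u1 where u1: "reduced_word N u1" "length u1 + 1 = length u"
      "Wword N u1 = Wmult (sgen N t) (Wword N u)"
      "prod_list (map \<phi> u) = \<phi> t * prod_list (map \<phi> u1)"
    using prod_list_peel_descent[OF N _ reduced_word_tl[OF N r] t] by blast
  have u1_x: "Wword N u1 = Wmult (sgen N t) (Wmult (sgen N s) ?x)"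
    using u1(3) by (simp add: Wword_Cons sgen_Wmult_cancel)
  have "Wact_root (sgen N s) (Wact_root (sgen N t) (alpha_simple N s)) = alpha_simple N t"
    using \<gamma>(1) Wact_root_sgen_sgen by simp
  then have "alpha_simple N s \<in> Wact_root (Wword N u1) ` Rneg N"
    using descent_t unfolding u1_x sgen_Wmult_image_iff by simp
  moreover have "reduced_words_agree N \<phi> (Suc (length u1))"
    using reduced_words_agree_mono[OF agree] u1(2) by simp
  ultimately obtain u2 where "reduced_word N u2" "length u2 + 1 = length u1"
      "Wword N u2 = Wmult (sgen N s) (Wword N u1)" "prod_list (map \<phi> u1) = \<phi> s * prod_list (map \<phi> u2)"
    using prod_list_peel_descent[OF N _ u1(1) s] by blast
  with u1 u1_x show ?thesis by (intro that) auto
qed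

lemma prod_list_eq_commuting:
  assumes N: "2 \<le> N" and agree: "reduced_words_agree N \<phi> (length (s # u))"
    and ru: "reduced_word N (s # u)" and rv: "reduced_word N (t # v)" and eq: "Wword N (s # u) = Wword N (t # v)"
    and fix_t: "Wact_root (sgen N s) (alpha_simple N t) = alpha_simple N t"
    and fix_s: "Wact_root (sgen N t) (alpha_simple N s) = alpha_simple N s"
    and comm: "\<phi> s * \<phi> t = \<phi> t * \<phi> s"
  shows "prod_list (map \<phi> (s # u)) = prod_list (map \<phi> (t # v))"
proof -
  have s: "s < N" and t: "t < N" using ru rv by (auto simp: reduced_word_def)
  have len: "length (t # v) = length (s # u)" using ru rv eq by (simp add: reduced_word_def)
  have agree_v: "reduced_words_agree N \<phi> (length (t # v))" using agree len by simp
  have dt: "alpha_simple N t \<in> Wact_root (Wword N (s # u)) ` Rneg N"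
    and ds: "alpha_simple N s \<in> Wact_root (Wword N (t # v)) ` Rneg N"
    using reduced_word_Cons_descent[OF N rv] reduced_word_Cons_descent[OF N ru] eq by simp_all
  obtain u' where u': "reduced_word N u'" "length u' + 2 = length (s # u)"
      "Wword N u' = Wmult (sgen N t) (Wmult (sgen N s) (Wword N (s # u)))"
      "prod_list (map \<phi> (s # u)) = \<phi> s * (\<phi> t * prod_list (map \<phi> u'))"
    by (rule prod_list_peel_commuting[OF N agree ru t fix_t dt])
  obtain v' where v': "reduced_word N v'" "length v' + 2 = length (t # v)"
      "Wword N v' = Wmult (sgen N s) (Wmult (sgen N t) (Wword N (t # v)))"
      "prod_list (map \<phi> (t # v)) = \<phi> t * (\<phi> s * prod_list (map \<phi> v'))"
    by (rule prod_list_peel_commuting[OF N agree_v rv s fix_s ds])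
  have "Wword N u' = Wmult (Wmult (sgen N t) (sgen N s)) (Wword N (t # v))"
    using u'(3) eq by (simp add: Wmult_assoc)
  also have "\<dots> = Wmult (Wmult (sgen N s) (sgen N t)) (Wword N (t # v))"
    using sgen_commute[OF N s fix_t] by simp
  also have "\<dots> = Wword N v'"
    using v'(3) by (simp add: Wmult_assoc)
  finally have "Wword N u' = Wword N v'" .
  then have "prod_list (map \<phi> u') = prod_list (map \<phi> v')"
    using reduced_words_agreeD[OF agree _ u'(1) v'(1)] u'(2) by simp
  then show ?thesis using u'(4) v'(4) comm by (simp flip: mult.assoc)
qed

lemma prod_list_eq_braid:
  assumes N: "2 \<le> N" and agree: "reduced_words_agree N \<phi> (length (s # u))"
    and ru: "reduced_word N (s # u)" and rv: "reduced_word N (t # v)" and eq: "Wword N (s # u) = Wword N (t # v)"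
    and braid: "braid_pair N s t"
    and braid_\<phi>: "\<phi> s * (\<phi> t * \<phi> s) = \<phi> t * (\<phi> s * \<phi> t)"
  shows "prod_list (map \<phi> (s # u)) = prod_list (map \<phi> (t # v))"
proof -
  have s: "s < N" and t: "t < N" using ru rv by (auto simp: reduced_word_def)
  have len: "length (t # v) = length (s # u)" using ru rv eq by (simp add: reduced_word_def)
  have ds: "alpha_simple N s \<in> Wact_root (Wword N (s # u)) ` Rneg N"
    and dt: "alpha_simple N t \<in> Wact_root (Wword N (s # u)) ` Rneg N"
    using reduced_word_Cons_descent[OF N ru] reduced_word_Cons_descent[OF N rv] eq by simp_all
  obtain u' where u': "reduced_word N u'" "length u' + 3 = length (s # u)"
      "Wword N u' = Wmult (sgen N s) (Wmult (sgen N t) (Wmult (sgen N s) (Wword N (s # u))))"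
      "prod_list (map \<phi> (s # u)) = \<phi> s * (\<phi> t * (\<phi> s * prod_list (map \<phi> u')))"
    by (rule prod_list_peel_braid[OF N agree ru s t braid ds dt])
  have agree_v: "reduced_words_agree N \<phi> (length (t # v))" using agree len by simp
  obtain v' where v': "reduced_word N v'" "length v' + 3 = length (t # v)"
      "Wword N v' = Wmult (sgen N t) (Wmult (sgen N s) (Wmult (sgen N t) (Wword N (t # v))))"
      "prod_list (map \<phi> (t # v)) = \<phi> t * (\<phi> s * (\<phi> t * prod_list (map \<phi> v')))"
    by (rule prod_list_peel_braid[OF N agree_v rv t s braid_pair_sym[OF braid]]) (use dt ds eq in simp_all)
  have "Wword N u' = Wmult (Wmult (sgen N s) (Wmult (sgen N t) (sgen N s))) (Wword N (t # v))"
    using u'(3) eq by (simp add: Wmult_assoc)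
  also have "\<dots> = Wmult (Wmult (sgen N t) (Wmult (sgen N s) (sgen N t))) (Wword N (t # v))"
    using sgen_braid[OF N s t braid] by simp
  also have "\<dots> = Wword N v'"
    using v'(3) by (simp add: Wmult_assoc)
  finally have "Wword N u' = Wword N v'" .
  then have "prod_list (map \<phi> u') = prod_list (map \<phi> v')"
    using reduced_words_agreeD[OF agree _ u'(1) v'(1)] u'(2) by simp
  then show ?thesis using u'(4) v'(4) braid_\<phi> by (simp flip: mult.assoc)
qed

lemma prod_list_eq_Cons:
  fixes \<phi> :: "nat \<Rightarrow> 'b::monoid_mult"
  assumes N: "2 \<le> N"
    and comm: "\<And>s t. s < N \<Longrightarrow> t < N \<Longrightarrow> Wact_root (sgen N s) (alpha_simple N t) = alpha_simple N t \<Longrightarrow>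
      Wact_root (sgen N t) (alpha_simple N s) = alpha_simple N s \<Longrightarrow> \<phi> s * \<phi> t = \<phi> t * \<phi> s"
    and braid: "\<And>s t. s < N \<Longrightarrow> t < N \<Longrightarrow> braid_pair N s t \<Longrightarrow> \<phi> s * (\<phi> t * \<phi> s) = \<phi> t * (\<phi> s * \<phi> t)"
    and agree: "reduced_words_agree N \<phi> (length (s # u))"
    and ru: "reduced_word N (s # u)" and rv: "reduced_word N (t # v)" and eq: "Wword N (s # u) = Wword N (t # v)"
  shows "prod_list (map \<phi> (s # u)) = prod_list (map \<phi> (t # v))"
proof -
  have s: "s < N" and t: "t < N" using ru rv by (auto simp: reduced_word_def)
  show ?thesis
  proof (cases "s = t")
    case True
    have "Wword N u = Wmult (sgen N s) (Wword N (s # u))" "Wword N v = Wmult (sgen N t) (Wword N (t # v))"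
      by (simp_all add: Wword_Cons sgen_Wmult_cancel)
    with True eq have "Wword N u = Wword N v" by simp
    then have "prod_list (map \<phi> u) = prod_list (map \<phi> v)"
      using reduced_words_agreeD[OF agree _ reduced_word_tl[OF N ru] reduced_word_tl[OF N rv]] by simp
    then show ?thesis using True by simp
  next
    case False
    show ?thesis
    proof (cases rule: simple_pair_cases[OF N s t False])
      case 1
      have "alpha_simple N s \<in> Wact_root (Wword N (s # u)) ` Rneg N"
        "alpha_simple N t \<in> Wact_root (Wword N (s # u)) ` Rneg N"
        using reduced_word_Cons_descent[OF N ru] reduced_word_Cons_descent[OF N rv] eq by simp_all
      then have False by (rule not_both_descents_2[OF 1 reduced_word_Wset[OF N ru] s t False])
      then show ?thesis ..
    next
      case 2
      show ?thesis by (rule prod_list_eq_commuting[OF N agree ru rv eq 2 comm[OF s t 2]])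
    next
      case 3
      show ?thesis by (rule prod_list_eq_braid[OF N agree ru rv eq 3 braid[OF s t 3]])
    qed
  qed
qed

lemma reduced_words_agree_Suc:
  fixes \<phi> :: "nat \<Rightarrow> 'b::monoid_mult"
  assumes N: "2 \<le> N"
    and comm: "\<And>s t. s < N \<Longrightarrow> t < N \<Longrightarrow> Wact_root (sgen N s) (alpha_simple N t) = alpha_simple N t \<Longrightarrow>
      Wact_root (sgen N t) (alpha_simple N s) = alpha_simple N s \<Longrightarrow> \<phi> s * \<phi> t = \<phi> t * \<phi> s"
    and braid: "\<And>s t. s < N \<Longrightarrow> t < N \<Longrightarrow> braid_pair N s t \<Longrightarrow> \<phi> s * (\<phi> t * \<phi> s) = \<phi> t * (\<phi> s * \<phi> t)"
    and agree: "reduced_words_agree N \<phi> n"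
  shows "reduced_words_agree N \<phi> (Suc n)"
  unfolding reduced_words_agree_def
proof (intro allI impI)
  fix u v
  assume "length u < Suc n" and ru: "reduced_word N u" and rv: "reduced_word N v" and eq: "Wword N u = Wword N v"
  have len: "length v = length u" using ru rv eq by (simp add: reduced_word_def)
  show "prod_list (map \<phi> u) = prod_list (map \<phi> v)"
  proof (cases "length u < n")
    case True
    then show ?thesis using reduced_words_agreeD[OF agree _ ru rv eq] by blast
  next
    case False
    with \<open>length u < Suc n\<close> have agree_u: "reduced_words_agree N \<phi> (length u)"
      using agree by (simp add: less_Suc_eq)
    show ?thesis
    proof (cases u)
      case (Cons s u')
      then obtain t v' where v: "v = t # v'" using len by (cases v) auto
      show ?thesis
        using prod_list_eq_Cons[OF N comm braid, where s = s and u = u' and t = t and v = v']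
          agree_u ru rv eq Cons v
        by simp
    qed (use len in simp)
  qed
qed

theorem matsumoto:
  fixes \<phi> :: "nat \<Rightarrow> 'b::monoid_mult"
  assumes N: "2 \<le> N"
    and comm: "\<And>s t. s < N \<Longrightarrow> t < N \<Longrightarrow> Wact_root (sgen N s) (alpha_simple N t) = alpha_simple N t \<Longrightarrow>
      Wact_root (sgen N t) (alpha_simple N s) = alpha_simple N s \<Longrightarrow> \<phi> s * \<phi> t = \<phi> t * \<phi> s"
    and braid: "\<And>s t. s < N \<Longrightarrow> t < N \<Longrightarrow> braid_pair N s t \<Longrightarrow> \<phi> s * (\<phi> t * \<phi> s) = \<phi> t * (\<phi> s * \<phi> t)"
    and "reduced_word N u" "reduced_word N v" "Wword N u = Wword N v"
  shows "prod_list (map \<phi> u) = prod_list (map \<phi> v)"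
proof -
  have "reduced_words_agree N \<phi> n" for n
  proof (induction n)
    case 0
    show ?case by (simp add: reduced_words_agree_def)
  qed (rule reduced_words_agree_Suc[OF N comm braid])
  then show ?thesis using assms(4-6) by (blast intro: reduced_words_agreeD)
qed

section \<open>Minimal coset representatives\<close>

lemma same_block_mono:
  "same_block beta a b \<Longrightarrow> a \<le> c \<Longrightarrow> c \<le> b \<Longrightarrow> a \<le> d \<Longrightarrow> d \<le> b \<Longrightarrow> same_block beta c d"
  unfolding same_block_def by (meson le_less_trans order_trans linorder_not_le)

lemma sgen_Wbar_beta: "c \<in> Pi_beta N beta \<Longrightarrow> sgen N c \<in> Wbar_beta N beta"
  using Wbar_beta.step[OF Wbar_beta.one] by simp

lemma Wbeta_min_alpha_simple_Rpos:
  assumes N: "2 \<le> N" and wmin: "Wmult P (Wword N js) \<in> Wbeta_min N beta" and P: "diagram_aut N P"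
    and js: "reduced_word N js" and c: "c \<in> Pi_beta N beta"
  shows "Wact_root (Wword N js) (alpha_simple N c) \<in> Rpos N"
proof (rule ccontr)
  let ?x = "Wword N js" and ?\<alpha> = "alpha_simple N c"
  assume not_pos: "Wact_root ?x ?\<alpha> \<notin> Rpos N"
  txt \<open>Then \<open>x(-\<alpha>\<^sub>c)\<close> is a positive root sent to a negative one by \<open>x\<^sup>-\<^sup>1\<close>, so the exchange
    condition shortens \<open>x s\<^sub>c\<close>, contradicting the minimality of \<open>w = P x\<close> in \<open>w W\<^sub>\<beta>\<close>.\<close>
  have cN: "c < N" using c by (auto simp: Pi_beta_def)
  have x: "?x \<in> Wset N" using reduced_word_Wset[OF N js] .
  have \<alpha>: "?\<alpha> \<in> Rset N" using alpha_simple_Rset[OF N cN] .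
  have js_set: "set js \<subseteq> {..<N}" using js by (simp add: reduced_word_def)
  have pos: "Wact_root ?x (root_neg ?\<alpha>) \<in> Rpos N"
    using not_pos Rset_cases[OF Wact_root_Rset[OF x \<alpha>]] root_neg_Rpos_iff[OF Wact_root_Rset[OF x \<alpha>]]
    by (simp add: Wact_root_root_neg)
  have "root_neg ?\<alpha> \<in> Rneg N"
    using root_neg_Rneg_iff[OF \<alpha>] alpha_simple_Rpos[OF N cN] by simp
  then obtain u' where u': "length u' + 1 = length js" "set u' \<subseteq> set js"
    "Wmult (s_root (Wact_root ?x (root_neg ?\<alpha>))) ?x = Wword N u'"
    using exchange_condition[OF N js_set pos imageI] by blast
  have "Wmult ?x (sgen N c) = Wword N u'"
    using Wmult_s_root[OF x, of "root_neg ?\<alpha>"] u'(3) by (simp add: s_root_root_neg sgen_def)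
  moreover have "set u' \<subseteq> {..<N}" using u'(2) js_set by blast
  ultimately have "lengthW N (Wmult ?x (sgen N c)) < lengthW N ?x"
    using lengthW_Wword_le[OF N] u'(1) js by (fastforce simp: reduced_word_def)
  moreover have "lengthW N (Wmult (Wmult P ?x) (sgen N c)) = lengthW N (Wmult ?x (sgen N c))"
    using lengthW_diagram_aut_mult[OF P Wmult_Wset[OF x sgen_Wset[OF N cN]]] by (simp add: Wmult_assoc)
  moreover have "lengthW N (Wmult P ?x) \<le> lengthW N (Wmult (Wmult P ?x) (sgen N c))"
    using wmin sgen_Wbar_beta[OF c] by (auto simp: Wbeta_min_def)
  ultimately show False using lengthW_diagram_aut_mult[OF P x] by linarith
qed

lemma block_root_Rpos:
  assumes x: "x \<in> Wset N" and pos: "\<And>c. c \<in> Pi_beta N beta \<Longrightarrow> Wact_root x (alpha_simple N c) \<in> Rpos N"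
  shows "b = Suc (a + d) \<Longrightarrow> 1 \<le> a \<Longrightarrow> b \<le> N \<Longrightarrow> same_block beta a b \<Longrightarrow> Wact_root x (a, b, 0) \<in> Rpos N"
proof (induction d arbitrary: a)
  case 0
  then have "a \<in> Pi_beta N beta" by (auto simp: Pi_beta_def)
  then show ?case using pos[of a] 0 by (simp add: alpha_simple_def)
next
  case (Suc d)
  have "same_block beta a (Suc a)" "same_block beta (Suc a) b"
    using same_block_mono[OF Suc.prems(4)] Suc.prems(1) by auto
  then have "a \<in> Pi_beta N beta" and right: "Wact_root x (Suc a, b, 0) \<in> Rpos N"
    using Suc.prems Suc.IH[of "Suc a"] by (auto simp: Pi_beta_def)
  then have left: "Wact_root x (a, Suc a, 0) \<in> Rpos N"
    using pos Suc.prems(2) by (fastforce simp: alpha_simple_def)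
  have "root_sum (a, Suc a, 0) (Suc a, b, 0) (a, b, 0)" and "(a, b, 0) \<in> Rset N"
    using root_sum_chain[of a b "Suc a" 0 0] Suc.prems by (auto simp: Rset_def)
  then show ?case
    using root_sum_Rpos[OF root_sum_Wact_root[OF x] left right Wact_root_Rset[OF x]] by blast
qed

lemma block_root_simple:
  assumes x: "x \<in> Wset N" and pos: "\<And>c. c \<in> Pi_beta N beta \<Longrightarrow> Wact_root x (alpha_simple N c) \<in> Rpos N"
    and \<rho>: "\<rho> \<in> Rbeta_pos N beta" and simple: "Wact_root x \<rho> = alpha_simple N m"
  obtains j where "j \<in> Pi_beta N beta" "\<rho> = alpha_simple N j"
proof -
  obtain a b where ab: "\<rho> = (a, b, 0)" "1 \<le> a" "a < b" "b \<le> N" "same_block beta a b"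
    using \<rho> by (auto simp: Rbeta_pos_def)
  txt \<open>Otherwise \<open>\<rho>\<close> is the sum of two roots of \<open>R\<^sub>\<beta>\<^sub>,\<^sub>+\<close>, and so is its image under \<open>x\<close>.\<close>
  have "b = Suc a"
  proof (rule ccontr)
    assume "b \<noteq> Suc a"
    then obtain d where d: "b = Suc (Suc a + d)" using ab(3) by (metis less_imp_Suc_add Suc_lessI add_Suc)
    have "same_block beta a (Suc a)" "same_block beta (Suc a) b"
      using same_block_mono[OF ab(5)] ab d by auto
    then have "Wact_root x (a, Suc a, 0) \<in> Rpos N" "Wact_root x (Suc a, b, 0) \<in> Rpos N"
      using block_root_Rpos[OF x pos, where a = a and b = "Suc a" and d = 0]
        block_root_Rpos[OF x pos, where a = "Suc a" and b = b and d = d] ab d by auto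
    moreover have "root_sum (a, Suc a, 0) (Suc a, b, 0) (a, b, 0)"
      using root_sum_chain[of a b "Suc a" 0 0] ab by simp
    ultimately show False
      using root_sum_Rpos_not_alpha_simple[OF root_sum_Wact_root[OF x]] simple ab(1) by simp
  qed
  with ab show ?thesis by (intro that[of a]) (auto simp: Pi_beta_def alpha_simple_def)
qed

lemma zeta_eval_coroot_alpha_simple:
  assumes "zeta \<in> zeta_beta N beta" and j: "j \<in> Pi_beta N beta"
  shows "zeta_eval N zeta (coroot (alpha_simple N j)) = -1"
proof -
  have j1: "1 \<le> j" "Suc j \<le> N" using j by (auto simp: Pi_beta_def)
  then have "zeta_eval N zeta (coroot (alpha_simple N j)) =
      (\<Sum>l\<in>{1..N}. fst zeta l * of_int (ind j l - ind (Suc j) l))"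
    by (simp add: zeta_eval_def coroot_def alpha_simple_def)
  also have "\<dots> = (\<Sum>l\<in>{1..N}. (if l = j then fst zeta l else 0) - (if l = Suc j then fst zeta l else 0))"
    by (intro sum.cong refl) (auto simp: ind_def)
  also have "\<dots> = fst zeta j - fst zeta (Suc j)" using j1 by (simp add: sum_subtractf)
  also have "\<dots> = -1" using assms by (simp add: zeta_beta_def)
  finally show ?thesis .
qed

section \<open>Intertwiners\<close>

text \<open>The braid relation for \<open>\<phi>\<^sub>s = 1 + s \<alpha>\<^sub>s\<^sup>\<or>\<close> and \<open>\<phi>\<^sub>t = 1 + t \<alpha>\<^sub>t\<^sup>\<or>\<close> for adjacent \<open>s, t\<close>,
  abstracted to a ring: \<open>a, b\<close> stand for the images of \<open>s, t\<close> and \<open>x, y\<close> for those of \<open>\<alpha>\<^sub>s\<^sup>\<or>, \<alpha>\<^sub>t\<^sup>\<or>\<close>.\<close>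

lemma reflection_relations:
  fixes a x y :: "'a::ring_1"
  assumes aa: "a * a = 1" and ax: "a * x + x * a = -2" and ay: "a * y = (x + y) * a + 1"
  shows "y * a = a * x + a * y + 1"
    and "(x + y) * y * a = a * y * (x + y)"
    and "a * x * a * x = - (x * x) - 2 * (a * x)"
proof -
  have xa: "x * a = - (a * x) - 2"
  proof -
    have "x * a = (a * x + x * a) - a * x" by simp
    then show ?thesis using ax by simp
  qed
  show ya: "y * a = a * x + a * y + 1"
  proof -
    have "y * a = ((x + y) * a + 1) - x * a - 1" by (simp add: algebra_simps)
    also have "\<dots> = a * y - (- (a * x) - 2) - 1" using ay xa by simp
    also have "\<dots> = a * x + a * y + 1" by (simp add: algebra_simps)
    finally show ?thesis .
  qed
  have xya: "(x + y) * a = a * y - 1"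
  proof -
    have "(x + y) * a = x * a + y * a" by (simp add: distrib_right)
    also have "\<dots> = (- (a * x) - 2) + (a * x + a * y + 1)" by (simp only: xa ya)
    also have "\<dots> = a * y - 1" by (simp add: algebra_simps)
    finally show ?thesis .
  qed
  have "(x + y) * y * a = (x + y) * (y * a)" by (simp add: mult.assoc)
  also have "\<dots> = (x + y) * a * (x + y) + (x + y)" by (simp only: ya) (simp add: algebra_simps)
  also have "\<dots> = (a * y - 1) * (x + y) + (x + y)" by (simp only: xya)
  also have "\<dots> = a * y * (x + y)" by (simp add: algebra_simps)
  finally show "(x + y) * y * a = a * y * (x + y)" .
  have "a * x * a * x = a * (x * a) * x" by (simp add: mult.assoc)
  also have "\<dots> = - (a * a * x * x) - a * 2 * x" by (simp add: xa algebra_simps)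
  also have "\<dots> = - (x * x) - 2 * (a * x)"
    by (simp add: aa mult_2 mult_2_right distrib_left distrib_right flip: mult.assoc)
  finally show "a * x * a * x = - (x * x) - 2 * (a * x)" .
qed

lemma reflection_triple:
  fixes a b x y :: "'a::ring_1"
  assumes aa: "a * a = 1" and ax: "a * x + x * a = -2" and ay: "a * y = (x + y) * a + 1"
    and xb: "x * b = b * x + b * y + 1"
  shows "a * x * b * y * a * x = a * b * a * y * (x + y) * x + (x * x + y * x) + a * x"
proof -
  note ya = reflection_relations(1)[OF aa ax ay] and xya = reflection_relations(2)[OF aa ax ay]
  have "a * x * b * y * a * x = a * (x * b) * y * a * x" by (simp add: mult.assoc)
  also have "\<dots> = a * b * ((x + y) * y * a) * x + a * (y * a) * x"
    by (simp add: xb algebra_simps)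
  also have "\<dots> = a * b * (a * y * (x + y)) * x + a * (a * x + a * y + 1) * x"
    by (simp only: xya ya)
  also have "\<dots> = a * b * a * y * (x + y) * x + (x * x + y * x) + a * x"
    using aa by (simp add: algebra_simps flip: mult.assoc)
  finally show ?thesis .
qed

lemma intertwiner_braid_identity:
  fixes a b x y :: "'a::ring_1"
  assumes aa: "a * a = 1" and bb: "b * b = 1" and aba: "a * (b * a) = b * (a * b)"
    and xy: "x * y = y * x"
    and ax: "a * x + x * a = -2" and ay: "a * y = (x + y) * a + 1"
    and bx: "b * x = (x + y) * b + 1" and "by": "b * y + y * b = -2"
  shows "(1 + a * x) * ((1 + b * y) * (1 + a * x)) = (1 + b * y) * ((1 + a * x) * (1 + b * y))"
proof -
  have bx': "b * x = (y + x) * b + 1" using bx by (simp add: add.commute)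
  have xb: "x * b = b * x + b * y + 1" using reflection_relations(1)[OF bb "by" bx'] by (simp add: algebra_simps)
  have ya: "y * a = a * y + a * x + 1" using reflection_relations(1)[OF aa ax ay] by (simp add: algebra_simps)
  have "a * b * a * y * (x + y) * x = (a * (b * a)) * (y * (x + y) * x)" by (simp add: mult.assoc)
  also have "\<dots> = (b * (a * b)) * (x * (y + x) * y)"
    using xy by (simp add: aba algebra_simps) (simp add: mult.assoc[symmetric])
  also have "\<dots> = b * a * b * x * (y + x) * y" by (simp add: mult.assoc)
  finally have middle: "a * b * a * y * (x + y) * x = b * a * b * x * (y + x) * y" .
  have lhs: "(1 + a * x) * ((1 + b * y) * (1 + a * x)) =
      1 + 2 * (a * x) + b * y + a * x * b * y + a * x * a * x + b * y * a * x + a * x * b * y * a * x"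
    by (simp add: algebra_simps mult_2)
  have rhs: "(1 + b * y) * ((1 + a * x) * (1 + b * y)) =
      1 + 2 * (b * y) + a * x + b * y * a * x + b * y * b * y + a * x * b * y + b * y * a * x * b * y"
    by (simp add: algebra_simps mult_2)
  have collect: "1 + 2 * A + B + C + (- X - 2 * A) + D + (M + (X + P) + A) =
      1 + 2 * B + A + D + (- Y - 2 * B) + C + (M + (Y + P) + B)" for A B C D M P X Y :: 'a
    by (simp add: algebra_simps)
  show ?thesis
    unfolding lhs rhs reflection_relations(3)[OF aa ax ay] reflection_relations(3)[OF bb "by" bx']
      reflection_triple[OF aa ax ay xb] reflection_triple[OF bb "by" bx' ya] middle xy[symmetric]
    by (rule collect)
qed

text \<open>\<open>pairing \<rho> r\<close> is \<open>\<rho>(r\<^sup>\<or>)\<close>.\<close>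
definition pairing :: "root \<Rightarrow> root \<Rightarrow> int" where
  "pairing \<rho> r = (case \<rho> of (p, q, _) \<Rightarrow> case r of (a, b, _) \<Rightarrow> (ind a p - ind b p) - (ind a q - ind b q))"

lemma pairing_self: "p \<noteq> q \<Longrightarrow> pairing (p, q, k) (p, q, k') = 2"
  by (simp add: pairing_def ind_def)

lemma pairing_root_sum:
  assumes "root_sum a b c" "a \<in> Rset N" "b \<in> Rset N"
  shows "pairing a b = -1 \<and> pairing b a = -1"
proof -
  from assms(1) obtain p q r k1 k2 where "p \<noteq> r"
    and "(a = (p, q, k1) \<and> b = (q, r, k2)) \<or> (b = (p, q, k1) \<and> a = (q, r, k2))"
    unfolding root_sum_def by blast
  then show ?thesis
  proof (elim disjE conjE)
    assume a: "a = (p, q, k1)" and b: "b = (q, r, k2)"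
    have "p \<noteq> q" "q \<noteq> r" using assms(2,3) a b by (auto simp: Rset_def)
    with \<open>p \<noteq> r\<close> show ?thesis unfolding a b by (simp add: pairing_def ind_def)
  next
    assume b: "b = (p, q, k1)" and a: "a = (q, r, k2)"
    have "p \<noteq> q" "q \<noteq> r" using assms(2,3) a b by (auto simp: Rset_def)
    with \<open>p \<noteq> r\<close> show ?thesis unfolding a b by (simp add: pairing_def ind_def)
  qed
qed

lemma pairing_fixed:
  assumes "p \<noteq> q" "Wact_root (s_root (p, q, k0)) r = r"
  shows "pairing (p, q, k0) r = 0"
proof -
  obtain a b k where r: "r = (a, b, k)" by (cases r)
  have "transpose p q a = a" "transpose p q b = b" using assms(2) unfolding r s_root_eq Wact_root_def by auto
  then have "a \<noteq> p" "a \<noteq> q" "b \<noteq> p" "b \<noteq> q" using assms(1) by (auto simp: transpose_def split: if_splits)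
  then show ?thesis unfolding r by (simp add: pairing_def ind_def)
qed

lemma is_moduleD:
  assumes "is_module act"
  shows "act (a + b) m = act a m + act b m" "act (a * b) m = act a (act b m)" "act 1 m = m"
    "act a (m + n) = act a m + act a n" "act a 0 = 0" "act a (- m) = - act a m" "act (- a) m = - act a m"
proof -
  show "act (a + b) m = act a m + act b m" "act (a * b) m = act a (act b m)" "act 1 m = m"
    "act a (m + n) = act a m + act a n"
    using assms by (auto simp: is_module_def)
  show "act a 0 = 0" using assms unfolding is_module_def by (metis add_cancel_right_right add_0)
  then show "act a (- m) = - act a m"
    using assms unfolding is_module_def by (metis add.right_inverse neg_eq_iff_add_eq_0)
  have "act 0 m = 0" using assms unfolding is_module_def by (metis add_cancel_right_right add_0)
  then show "act (- a) m = - act a m"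
    using assms unfolding is_module_def by (metis add.right_inverse neg_eq_iff_add_eq_0)
qed

locale dDAHA_image =
  fixes N :: nat and \<iota> :: "complex \<Rightarrow> 'a::ring_1" and g :: "Welt \<Rightarrow> 'a" and Y :: "nat \<Rightarrow> 'a" and Z :: 'a
  assumes N2: "2 \<le> N" and hom: "dDAHA_hom N \<iota> g Y Z"
begin

definition Ycoroot :: "root \<Rightarrow> 'a" where
  "Ycoroot r = (case r of (i, j, k) \<Rightarrow> Y i - Y j + of_int k * Z)"

definition phi :: "nat \<Rightarrow> 'a" where
  "phi m = 1 + g (sgen N m) * Ycoroot (alpha_simple N m)"

lemma iota_one: "\<iota> 1 = 1"
  using hom by (simp add: dDAHA_hom_def)

lemma iota_add: "\<iota> (a + b) = \<iota> a + \<iota> b"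
  using hom by (simp add: dDAHA_hom_def)

lemma iota_of_int: "\<iota> (of_int z) = of_int z"
proof -
  have zero: "\<iota> 0 = 0" using iota_add[of 0 0] by simp
  have nat: "\<iota> (of_nat n) = of_nat n" for n
    by (induction n) (simp_all add: zero iota_add iota_one)
  have "\<iota> (- a) = - \<iota> a" for a
    using iota_add[of a "- a"] zero neg_eq_iff_add_eq_0[of "\<iota> a" "\<iota> (- a)"] by simp
  with nat show ?thesis by (cases z rule: int_cases2) simp_all
qed

lemma g_Wmult: "a \<in> Wset N \<Longrightarrow> b \<in> Wset N \<Longrightarrow> g (Wmult a b) = g a * g b"
  using hom by (simp add: dDAHA_hom_def)

lemma g_Wone: "g Wone = 1"
  using hom by (simp add: dDAHA_hom_def)

lemma g_sgen_sgen:
  assumes "m < N"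
  shows "g (sgen N m) * g (sgen N m) = 1"
  using g_Wmult[OF sgen_Wset[OF N2 assms] sgen_Wset[OF N2 assms]] by (simp add: sgen_sgen g_Wone)

lemma Ycoroot_commute: "Ycoroot r * Ycoroot q = Ycoroot q * Ycoroot r"
proof -
  have YY: "Y i * Y j = Y j * Y i" and YZ: "Y i * Z = Z * Y i" for i j
    using hom by (simp_all add: dDAHA_hom_def)
  have of_int_commute: "x * (of_int k * y) = of_int k * (x * y)" for x y :: 'a and k
    by (metis mult.assoc mult_of_int_commute)
  have Y_comm: "Y c * Ycoroot r = Ycoroot r * Y c" for c r
  proof -
    obtain a b k where "Ycoroot r = Y a - Y b + of_int k * Z" by (cases r) (simp add: Ycoroot_def)
    moreover have "Y c * (Y a - Y b + of_int k * Z) = Y a * Y c - Y b * Y c + of_int k * (Z * Y c)"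
      by (simp add: ring_distribs of_int_commute YY[of c] YZ)
    ultimately show ?thesis by (simp add: ring_distribs mult.assoc)
  qed
  have Z_comm: "Z * Ycoroot r = Ycoroot r * Z" for r
  proof -
    obtain a b k where "Ycoroot r = Y a - Y b + of_int k * Z" by (cases r) (simp add: Ycoroot_def)
    moreover have "Z * (Y a - Y b + of_int k * Z) = Y a * Z - Y b * Z + of_int k * (Z * Z)"
      by (simp add: ring_distribs of_int_commute YZ)
    ultimately show ?thesis by (simp add: ring_distribs mult.assoc)
  qed
  obtain a b k where "Ycoroot q = Y a - Y b + of_int k * Z" by (cases q) (simp add: Ycoroot_def)
  moreover have "Ycoroot r * (Y a - Y b + of_int k * Z) =
      Y a * Ycoroot r - Y b * Ycoroot r + of_int k * (Z * Ycoroot r)"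
    by (simp add: ring_distribs of_int_commute Y_comm Z_comm)
  ultimately show ?thesis by (simp add: ring_distribs mult.assoc)
qed

lemma Ycoroot_root_neg: "Ycoroot (root_neg r) = - Ycoroot r"
  by (cases r) (simp add: root_neg_def Ycoroot_def algebra_simps)

lemma Ycoroot_root_sum: "root_sum a b c \<Longrightarrow> Ycoroot c = Ycoroot a + Ycoroot b"
  unfolding root_sum_def by (auto simp: Ycoroot_def algebra_simps)

lemma hmap_coroot: assumes r: "r \<in> Rset N" shows "hmap \<iota> Y Z N (coroot r) = Ycoroot r"
proof -
  obtain i j k where rr: "r = (i, j, k)" by (cases r)
  have ij: "i \<in> {1..N}" "j \<in> {1..N}" using r rr by (auto simp: Rset_def)
  have "(\<Sum>l\<in>{1..N}. \<iota> (of_int (ind i l - ind j l)) * Y l) =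
      (\<Sum>l\<in>{1..N}. (if l = i then Y l else 0) - (if l = j then Y l else 0))"
    by (intro sum.cong refl) (subst iota_of_int, auto simp: ind_def)
  also have "\<dots> = Y i - Y j" using ij by (simp add: sum_subtractf)
  finally show ?thesis unfolding rr by (simp add: hmap_def coroot_def Ycoroot_def iota_of_int)
qed

lemma coroot_tset: "r \<in> Rset N \<Longrightarrow> coroot r \<in> tset N"
  by (cases r) (auto simp: coroot_def tset_def Rset_def ind_def)

lemma Wact_t_coroot:
  assumes a: "a \<in> Wset N" and r: "r \<in> Rset N"
  shows "Wact_t N a (coroot r) = coroot (Wact_root a r)"
proof -
  obtain i j k where rr: "r = (i, j, k)" by (cases r)
  obtain w eta where aa: "a = (w, eta)" by (cases a)
  have w: "w permutes {1..N}" using a aa by (simp add: Wset_def)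
  have ij: "i \<in> {1..N}" "j \<in> {1..N}" using r rr by (auto simp: Rset_def)
  have ind_inv: "(ind i (inv w l) :: int) = ind (w i) l" for i l
    unfolding ind_def using permutes_inv_eq[OF w, of l i] by auto
  have "(\<Sum>l\<in>{1..N}. (of_int (eta l) :: complex) * (of_int (ind i l) - of_int (ind j l))) =
      (\<Sum>l\<in>{1..N}. (if l = i then of_int (eta l) else 0) - (if l = j then of_int (eta l) else 0))"
    by (intro sum.cong) (auto simp: ind_def)
  also have "\<dots> = of_int (eta i) - of_int (eta j)" using ij by (simp add: sum_subtractf)
  finally show ?thesis unfolding rr aa
    by (simp add: Wact_t_def coroot_def Wact_root_def ind_inv fun_eq_iff)
qed

lemma root_eval_coroot: "root_eval \<rho> (coroot r) = of_int (pairing \<rho> r)"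
  by (cases \<rho>; cases r) (simp add: root_eval_def coroot_def pairing_def)

lemma g_sgen_Ycoroot:
  assumes m: "m < N" and r: "r \<in> Rset N"
  shows "g (sgen N m) * Ycoroot r =
    Ycoroot (Wact_root (sgen N m) r) * g (sgen N m) - of_int (pairing (alpha_simple N m) r)"
proof -
  have sr: "Wact_root (sgen N m) r \<in> Rset N" using Wact_root_Rset[OF sgen_Wset[OF N2 m] r] .
  have "g (sgen N m) * hmap \<iota> Y Z N (coroot r) - hmap \<iota> Y Z N (Wact_t N (sgen N m) (coroot r)) * g (sgen N m)
      = - \<iota> (root_eval (alpha_simple N m) (coroot r))"
    using hom coroot_tset[OF r] m by (simp add: dDAHA_hom_def)
  then have "g (sgen N m) * Ycoroot r - Ycoroot (Wact_root (sgen N m) r) * g (sgen N m) =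
      - of_int (pairing (alpha_simple N m) r)"
    using hmap_coroot[OF r] hmap_coroot[OF sr] Wact_t_coroot[OF sgen_Wset[OF N2 m] r]
    by (simp only: root_eval_coroot iota_of_int)
  then show ?thesis by (simp add: algebra_simps)
qed

lemma g_piW_Ycoroot:
  assumes r: "r \<in> Rset N"
  shows "g (piW N) * Ycoroot r = Ycoroot (Wact_root (piW N) r) * g (piW N)"
proof -
  have "Wact_root (piW N) r \<in> Rset N" using Wact_root_Rset[OF piW_Wset[OF N2] r] .
  moreover have "g (piW N) * hmap \<iota> Y Z N (coroot r) = hmap \<iota> Y Z N (Wact_t N (piW N) (coroot r)) * g (piW N)"
    using hom coroot_tset[OF r] by (simp add: dDAHA_hom_def)
  ultimately show ?thesis
    using hmap_coroot[OF r] Wact_t_coroot[OF piW_Wset[OF N2] r] by (simp add: hmap_coroot)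
qed

lemma Ycoroot_s_root:
  assumes pq: "p \<noteq> q"
  shows "Ycoroot (Wact_root (s_root (p, q, k0)) r) = Ycoroot r - of_int (pairing (p, q, k0) r) * Ycoroot (p, q, k0)"
proof -
  obtain a b k where r: "r = (a, b, k)" by (cases r)
  have Y_transpose: "Y (transpose p q c) = Y c - of_int (ind c p - ind c q) * (Y p - Y q)" for c
    using pq by (auto simp: transpose_def ind_def)
  have act: "Wact_root (s_root (p, q, k0)) (a, b, k) = (transpose p q a, transpose p q b,
      k - (k0 * (ind a p - ind a q) - k0 * (ind b p - ind b q)))"
    unfolding s_root_eq by (simp add: Wact_root_def ind_def)
  have collect: "(Ya - of_int u * P) - (Yb - of_int v * P) + of_int (k - (k0 * u - k0 * v)) * Z
      = (Ya - Yb + of_int k * Z) - of_int (u - v) * (P + of_int k0 * Z)" for Ya Yb P :: 'a and u v :: int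
  proof -
    have "of_int c * (of_int d * Z) = of_int (c * d) * Z" for c d :: int
      by (simp add: mult.assoc[symmetric])
    then show ?thesis by (simp add: algebra_simps del: of_int_mult)
  qed
  have "Ycoroot (Wact_root (s_root (p, q, k0)) r) = Y (transpose p q a) - Y (transpose p q b) +
      of_int (k - (k0 * (ind a p - ind a q) - k0 * (ind b p - ind b q))) * Z"
    unfolding r act by (simp add: Ycoroot_def)
  also have "\<dots> = (Y a - of_int (ind a p - ind a q) * (Y p - Y q)) - (Y b - of_int (ind b p - ind b q) * (Y p - Y q)) +
      of_int (k - (k0 * (ind a p - ind a q) - k0 * (ind b p - ind b q))) * Z"
    by (simp only: Y_transpose)
  also have "\<dots> = (Y a - Y b + of_int k * Z) -
      of_int ((ind a p - ind a q) - (ind b p - ind b q)) * (Y p - Y q + of_int k0 * Z)"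
    by (rule collect)
  also have "\<dots> = Ycoroot r - of_int (pairing (p, q, k0) r) * Ycoroot (p, q, k0)"
    by (simp add: r Ycoroot_def pairing_def algebra_simps)
  finally show ?thesis .
qed

lemma Ycoroot_sgen:
  assumes m: "m < N"
  shows "Ycoroot (Wact_root (sgen N m) r) = Ycoroot r - of_int (pairing (alpha_simple N m) r) * Ycoroot (alpha_simple N m)"
proof -
  obtain p q k where \<alpha>: "alpha_simple N m = (p, q, k)" "p \<noteq> q"
    using alpha_simple_Rset[OF N2 m] by (cases "alpha_simple N m") (auto simp: Rset_def)
  then show ?thesis using Ycoroot_s_root[of p q k r] by (simp add: sgen_def)
qed

lemma phi_gen_eq_phi: "m < N \<Longrightarrow> phi_gen N \<iota> g Y Z m = phi m"
  by (simp add: phi_gen_def phi_def hmap_coroot alpha_simple_Rset N2)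

lemma phi_Ycoroot:
  assumes m: "m < N" and r: "r \<in> Rset N"
  shows "phi m * Ycoroot r = Ycoroot (Wact_root (sgen N m) r) * phi m"
proof -
  let ?G = "g (sgen N m)" and ?H = "Ycoroot (alpha_simple N m)"
    and ?c = "of_int (pairing (alpha_simple N m) r) :: 'a"
    and ?R = "Ycoroot r" and ?R' = "Ycoroot (Wact_root (sgen N m) r)"
  have "phi m * ?R = ?R + ?G * (?H * ?R)" by (simp add: phi_def algebra_simps)
  also have "\<dots> = ?R + (?G * ?R) * ?H" by (simp add: Ycoroot_commute mult.assoc)
  also have "\<dots> = ?R + (?R' * ?G - ?c) * ?H" by (simp only: g_sgen_Ycoroot[OF m r])
  also have "\<dots> = (?R - ?c * ?H) + ?R' * (?G * ?H)" by (simp add: algebra_simps)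
  also have "\<dots> = ?R' * phi m" by (simp only: Ycoroot_sgen[OF m, symmetric]) (simp add: phi_def algebra_simps)
  finally show ?thesis .
qed

lemma g_sgen_Ycoroot_fixed:
  assumes m: "m < N" and fixed: "Wact_root (sgen N m) r = r" and r: "r \<in> Rset N"
  shows "g (sgen N m) * Ycoroot r = Ycoroot r * g (sgen N m)"
proof -
  obtain p q k where \<alpha>: "alpha_simple N m = (p, q, k)" "p \<noteq> q"
    using alpha_simple_Rset[OF N2 m] by (cases "alpha_simple N m") (auto simp: Rset_def)
  then have "pairing (alpha_simple N m) r = 0" using pairing_fixed fixed by (simp add: sgen_def)
  then show ?thesis using g_sgen_Ycoroot[OF m r] fixed by simp
qed

lemma phi_commute:
  assumes s: "s < N" and t: "t < N"
    and fix_t: "Wact_root (sgen N s) (alpha_simple N t) = alpha_simple N t"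
    and fix_s: "Wact_root (sgen N t) (alpha_simple N s) = alpha_simple N s"
  shows "phi s * phi t = phi t * phi s"
proof -
  let ?Gs = "g (sgen N s)" and ?Gt = "g (sgen N t)"
    and ?Hs = "Ycoroot (alpha_simple N s)" and ?Ht = "Ycoroot (alpha_simple N t)"
  have c1: "?Gt * ?Hs = ?Hs * ?Gt" by (rule g_sgen_Ycoroot_fixed[OF t fix_s alpha_simple_Rset[OF N2 s]])
  have c2: "?Gs * ?Ht = ?Ht * ?Gs" by (rule g_sgen_Ycoroot_fixed[OF s fix_t alpha_simple_Rset[OF N2 t]])
  have gg: "?Gs * ?Gt = ?Gt * ?Gs"
    using sgen_commute[OF N2 s fix_t] g_Wmult[OF sgen_Wset[OF N2 s] sgen_Wset[OF N2 t]]
      g_Wmult[OF sgen_Wset[OF N2 t] sgen_Wset[OF N2 s]] by simp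
  have "(?Gs * ?Hs) * (?Gt * ?Ht) = ?Gs * (?Hs * ?Gt) * ?Ht" by (simp add: mult.assoc)
  also have "\<dots> = (?Gs * ?Gt) * (?Hs * ?Ht)" by (simp add: c1[symmetric] mult.assoc)
  also have "\<dots> = (?Gt * ?Gs) * (?Ht * ?Hs)" by (simp only: gg Ycoroot_commute[of "alpha_simple N s"])
  also have "\<dots> = ?Gt * (?Gs * ?Ht) * ?Hs" by (simp add: mult.assoc)
  also have "\<dots> = (?Gt * ?Ht) * (?Gs * ?Hs)" by (simp add: c2 mult.assoc)
  finally have "(?Gs * ?Hs) * (?Gt * ?Ht) = (?Gt * ?Ht) * (?Gs * ?Hs)" .
  then show ?thesis by (simp add: phi_def algebra_simps)
qed

lemma g_sgen_Ycoroot_alpha_simple: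
  assumes m: "m < N"
  shows "g (sgen N m) * Ycoroot (alpha_simple N m) + Ycoroot (alpha_simple N m) * g (sgen N m) = -2"
proof -
  obtain p q k where \<alpha>: "alpha_simple N m = (p, q, k)" "p \<noteq> q"
    using alpha_simple_Rset[OF N2 m] by (cases "alpha_simple N m") (auto simp: Rset_def)
  then have "pairing (alpha_simple N m) (alpha_simple N m) = 2" by (simp add: pairing_self)
  then show ?thesis
    using g_sgen_Ycoroot[OF m alpha_simple_Rset[OF N2 m]] Wact_root_sgen_alpha_simple[OF N2 m]
    by (simp add: Ycoroot_root_neg)
qed

lemma g_sgen_Ycoroot_braid_pair:
  assumes s: "s < N" and t: "t < N" and braid: "braid_pair N s t"
  shows "g (sgen N s) * Ycoroot (alpha_simple N t) =
    (Ycoroot (alpha_simple N s) + Ycoroot (alpha_simple N t)) * g (sgen N s) + 1"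
proof -
  have sum: "root_sum (alpha_simple N s) (alpha_simple N t) (Wact_root (sgen N s) (alpha_simple N t))"
    using braid by (simp add: braid_pair_def)
  then have "pairing (alpha_simple N s) (alpha_simple N t) = -1"
    using pairing_root_sum alpha_simple_Rset[OF N2] s t by blast
  then show ?thesis
    using g_sgen_Ycoroot[OF s alpha_simple_Rset[OF N2 t]] Ycoroot_root_sum[OF sum] by simp
qed

lemma g_sgen_braid:
  assumes s: "s < N" and t: "t < N" and braid: "braid_pair N s t"
  shows "g (sgen N s) * (g (sgen N t) * g (sgen N s)) = g (sgen N t) * (g (sgen N s) * g (sgen N t))"
proof -
  have W: "sgen N s \<in> Wset N" "sgen N t \<in> Wset N" using sgen_Wset[OF N2] s t by auto
  then have "g (sgen N s) * (g (sgen N t) * g (sgen N s)) = g (Wmult (sgen N s) (Wmult (sgen N t) (sgen N s)))"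
    by (simp add: g_Wmult Wmult_Wset)
  also have "\<dots> = g (Wmult (sgen N t) (Wmult (sgen N s) (sgen N t)))" using sgen_braid[OF N2 s t braid] by simp
  also have "\<dots> = g (sgen N t) * (g (sgen N s) * g (sgen N t))" using W by (simp add: g_Wmult Wmult_Wset)
  finally show ?thesis .
qed

lemma phi_braid:
  assumes s: "s < N" and t: "t < N" and braid: "braid_pair N s t"
  shows "phi s * (phi t * phi s) = phi t * (phi s * phi t)"
proof -
  have "g (sgen N t) * Ycoroot (alpha_simple N s) =
      (Ycoroot (alpha_simple N s) + Ycoroot (alpha_simple N t)) * g (sgen N t) + 1"
    using g_sgen_Ycoroot_braid_pair[OF t s braid_pair_sym[OF braid]] by (simp add: add.commute)
  then show ?thesis unfolding phi_def
    by (rule intertwiner_braid_identity[OF g_sgen_sgen[OF s] g_sgen_sgen[OF t] g_sgen_braid[OF s t braid]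
          Ycoroot_commute g_sgen_Ycoroot_alpha_simple[OF s] g_sgen_Ycoroot_braid_pair[OF s t braid] _
          g_sgen_Ycoroot_alpha_simple[OF t]])
qed

lemma prod_list_phi_eq:
  "reduced_word N u \<Longrightarrow> reduced_word N v \<Longrightarrow> Wword N u = Wword N v \<Longrightarrow>
    prod_list (map phi u) = prod_list (map phi v)"
  using matsumoto[OF N2, of phi] phi_commute phi_braid by blast

lemma prod_list_phi_Ycoroot:
  "set u \<subseteq> {..<N} \<Longrightarrow> r \<in> Rset N \<Longrightarrow>
    prod_list (map phi u) * Ycoroot r = Ycoroot (Wact_root (Wword N u) r) * prod_list (map phi u)"
proof (induction u arbitrary: r)
  case (Cons m u)
  have m: "m < N" and u: "set u \<subseteq> {..<N}" using Cons.prems(1) by auto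
  have ur: "Wact_root (Wword N u) r \<in> Rset N" using Wact_root_Rset[OF Wword_Wset[OF N2 u] Cons.prems(2)] .
  have "prod_list (map phi (m # u)) * Ycoroot r = phi m * (prod_list (map phi u) * Ycoroot r)"
    by (simp add: mult.assoc)
  also have "\<dots> = (phi m * Ycoroot (Wact_root (Wword N u) r)) * prod_list (map phi u)"
    using Cons.IH[OF u Cons.prems(2)] by (simp add: mult.assoc)
  also have "\<dots> = Ycoroot (Wact_root (Wword N (m # u)) r) * prod_list (map phi (m # u))"
    using phi_Ycoroot[OF m ur] by (simp add: Wword_Cons Wact_root_mult mult.assoc)
  finally show ?case .
qed simp

definition intertwines_Ycoroot :: "Welt \<Rightarrow> bool" where
  "intertwines_Ycoroot p \<longleftrightarrow> p \<in> Wset N \<and> (\<forall>r\<in>Rset N. g p * Ycoroot r = Ycoroot (Wact_root p r) * g p)"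

lemma intertwines_Ycoroot_Wmult:
  assumes "intertwines_Ycoroot p" "intertwines_Ycoroot q"
  shows "intertwines_Ycoroot (Wmult p q)"
proof -
  have p: "p \<in> Wset N" and q: "q \<in> Wset N" using assms by (auto simp: intertwines_Ycoroot_def)
  have "g (Wmult p q) * Ycoroot r = Ycoroot (Wact_root (Wmult p q) r) * g (Wmult p q)" if r: "r \<in> Rset N" for r
  proof -
    have qr: "Wact_root q r \<in> Rset N" using Wact_root_Rset[OF q r] .
    have "g (Wmult p q) * Ycoroot r = g p * (g q * Ycoroot r)" by (simp add: g_Wmult[OF p q] mult.assoc)
    also have "\<dots> = (g p * Ycoroot (Wact_root q r)) * g q"
      using assms(2) r by (simp add: intertwines_Ycoroot_def mult.assoc)
    also have "\<dots> = Ycoroot (Wact_root (Wmult p q) r) * g (Wmult p q)"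
      using assms(1) qr by (simp add: intertwines_Ycoroot_def mult.assoc g_Wmult[OF p q] Wact_root_mult)
    finally show ?thesis .
  qed
  then show ?thesis using Wmult_Wset[OF p q] by (simp add: intertwines_Ycoroot_def)
qed

lemma intertwines_Ycoroot_Winv:
  assumes "intertwines_Ycoroot p"
  shows "intertwines_Ycoroot (Winv p)"
proof -
  let ?q = "Winv p"
  have p: "p \<in> Wset N" using assms by (simp add: intertwines_Ycoroot_def)
  have q: "?q \<in> Wset N" using Winv_Wset[OF p] .
  have qp: "g ?q * g p = 1" and pq: "g p * g ?q = 1"
    using g_Wmult[OF q p] g_Wmult[OF p q] Winv_Wmult[OF p] Wmult_Winv[OF p] g_Wone by simp_all
  have "g ?q * Ycoroot r = Ycoroot (Wact_root ?q r) * g ?q" if r: "r \<in> Rset N" for r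
  proof -
    have qr: "Wact_root ?q r \<in> Rset N" using Wact_root_Rset[OF q r] .
    have "g ?q * Ycoroot r = g ?q * (Ycoroot (Wact_root p (Wact_root ?q r)) * g p) * g ?q"
      by (simp add: Wact_root_Winv[OF p] mult.assoc pq)
    also have "\<dots> = (g ?q * g p) * Ycoroot (Wact_root ?q r) * g ?q"
      using assms qr by (simp add: intertwines_Ycoroot_def mult.assoc)
    also have "\<dots> = Ycoroot (Wact_root ?q r) * g ?q" by (simp add: qp)
    finally show ?thesis .
  qed
  then show ?thesis using q by (simp add: intertwines_Ycoroot_def)
qed

lemma intertwines_Ycoroot_Wpow_piW: "intertwines_Ycoroot (Wpow (piW N) k)"
proof (rule Wpow_induct)
  show "intertwines_Ycoroot Wone" by (simp add: intertwines_Ycoroot_def g_Wone)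
  show "intertwines_Ycoroot (piW N)"
    using g_piW_Ycoroot piW_Wset[OF N2] by (simp add: intertwines_Ycoroot_def)
  then show "intertwines_Ycoroot (Winv (piW N))" by (rule intertwines_Ycoroot_Winv)
qed (rule intertwines_Ycoroot_Wmult)

lemma phi_expr_eq:
  assumes "set js \<subseteq> {..<N}"
  shows "phi_expr N \<iota> g Y Z k js = g (Wpow (piW N) k) * prod_list (map phi js)"
proof -
  have "foldr (\<lambda>j acc. phi_gen N \<iota> g Y Z j * acc) js 1 = prod_list (map phi js)"
    using assms by (induction js) (simp_all add: phi_gen_eq_phi)
  then show ?thesis by (simp add: phi_expr_def)
qed

lemma phi_word_exchange:
  assumes js: "reduced_word N js" and j: "j < N" and i': "i' < N"
    and xj: "Wact_root (Wword N js) (alpha_simple N j) = alpha_simple N i'"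
  shows "phi i' * prod_list (map phi js) = prod_list (map phi js) * phi j"
proof -
  let ?x = "Wword N js"
  have x: "?x \<in> Wset N" using reduced_word_Wset[OF N2 js] .
  have "Wmult ?x (sgen N j) = Wmult (sgen N i') ?x"
    using Wmult_s_root[OF x, of "alpha_simple N j"] xj by (simp add: sgen_def)
  then have w: "Wword N (js @ [j]) = Wword N (i' # js)" by (simp add: Wword_append Wword_Cons)
  have "alpha_simple N i' \<in> Wact_root ?x ` Rpos N" using xj alpha_simple_Rpos[OF N2 j] by (metis image_eqI)
  then have "lengthW N (Wword N (i' # js)) = length js + 1"
    using lengthW_sgen_mult_Rpos[OF N2 i' x] js by (simp add: Wword_Cons reduced_word_def)
  then have r1: "reduced_word N (i' # js)" using js i' by (simp add: reduced_word_def)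
  then have r2: "reduced_word N (js @ [j])" using w js j by (simp add: reduced_word_def)
  show ?thesis using prod_list_phi_eq[OF r2 r1 w] by simp
qed

lemma phi_g_intertwiner:
  assumes P: "intertwines_Ycoroot P" and i: "i < N" and i': "i' < N"
    and Pi': "Wact_root P (alpha_simple N i') = alpha_simple N i"
  shows "Ycoroot (alpha_simple N i) * g P = g P * Ycoroot (alpha_simple N i')"
    and "phi i * g P = g P * phi i'"
proof -
  have PW: "P \<in> Wset N" using P by (simp add: intertwines_Ycoroot_def)
  show Y: "Ycoroot (alpha_simple N i) * g P = g P * Ycoroot (alpha_simple N i')"
    using P alpha_simple_Rset[OF N2 i'] Pi' by (simp add: intertwines_Ycoroot_def)
  have "Wmult P (sgen N i') = Wmult (sgen N i) P"
    using Wmult_s_root[OF PW, of "alpha_simple N i'"] Pi' by (simp add: sgen_def)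
  then have G: "g P * g (sgen N i') = g (sgen N i) * g P"
    using g_Wmult[OF PW sgen_Wset[OF N2 i']] g_Wmult[OF sgen_Wset[OF N2 i] PW] by simp
  have "g P * phi i' = g P + (g P * g (sgen N i')) * Ycoroot (alpha_simple N i')"
    by (simp add: phi_def algebra_simps)
  also have "\<dots> = g P + g (sgen N i) * (Ycoroot (alpha_simple N i) * g P)"
    by (simp add: G Y mult.assoc)
  also have "\<dots> = phi i * g P" by (simp add: phi_def algebra_simps)
  finally show "phi i * g P = g P * phi i'" by simp
qed

lemma phi_intertwiner_conj:
  assumes js: "reduced_word N js" and i: "i < N" and j: "j < N" and i': "i' < N"
    and xj: "Wact_root (Wword N js) (alpha_simple N j) = alpha_simple N i'"
    and P: "intertwines_Ycoroot P" and Pi': "Wact_root P (alpha_simple N i') = alpha_simple N i"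
  defines "M \<equiv> g P * prod_list (map phi js)"
  shows "phi i * M = M * phi j"
    and "Ycoroot (alpha_simple N i) * M = M * Ycoroot (alpha_simple N j)"
proof -
  have set_js: "set js \<subseteq> {..<N}" using js by (simp add: reduced_word_def)
  show "phi i * M = M * phi j"
    unfolding M_def using phi_g_intertwiner(2)[OF P i i' Pi'] phi_word_exchange[OF js j i' xj]
    by (simp flip: mult.assoc) (simp add: mult.assoc)
  show "Ycoroot (alpha_simple N i) * M = M * Ycoroot (alpha_simple N j)"
    unfolding M_def using phi_g_intertwiner(1)[OF P i i' Pi']
      prod_list_phi_Ycoroot[OF set_js alpha_simple_Rset[OF N2 j]] xj
    by (simp flip: mult.assoc) (simp add: mult.assoc)
qed

lemma act_Ycoroot_Pi_beta:
  assumes act: "is_module act" and zeta: "zeta \<in> zeta_beta N beta" and j: "j \<in> Pi_beta N beta"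
    and weight: "\<forall>xi \<in> tset N. act (hmap \<iota> Y Z N xi) v = act (\<iota> (zeta_eval N zeta xi)) v"
  shows "act (Ycoroot (alpha_simple N j)) v = - v"
proof -
  have "alpha_simple N j \<in> Rset N" using alpha_simple_Rset[OF N2] j by (auto simp: Pi_beta_def)
  then have "act (Ycoroot (alpha_simple N j)) v = act (\<iota> (zeta_eval N zeta (coroot (alpha_simple N j)))) v"
    using weight[rule_format, OF coroot_tset] hmap_coroot by simp
  also have "\<dots> = act (- 1) v"
    using zeta_eval_coroot_alpha_simple[OF zeta j] iota_of_int[of "-1"] by simp
  finally show ?thesis by (simp add: is_moduleD[OF act])
qed

text \<open>If \<open>\<alpha>\<^sub>j\<^sup>\<or>\<close> acts on \<open>v\<close> by \<open>-1\<close> and \<open>s\<^sub>j\<close> fixes \<open>v\<close>, then \<open>\<phi>\<^sub>j v = 0\<close>; moving \<open>\<phi>\<^sub>i\<close> through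
  \<open>M\<close> gives \<open>0 = \<phi>\<^sub>i M v = M v - s\<^sub>i M v\<close>.\<close>
lemma g_sgen_fixes_intertwined_vector:
  assumes act: "is_module act"
    and phi: "phi i * M = M * phi j" and Y: "Ycoroot (alpha_simple N i) * M = M * Ycoroot (alpha_simple N j)"
    and Yv: "act (Ycoroot (alpha_simple N j)) v = - v" and gv: "act (g (sgen N j)) v = v"
  shows "act (g (sgen N i) * M) v = act M v"
proof -
  note module = is_moduleD[OF act]
  have "act (phi j) v = 0" using Yv gv by (simp add: phi_def module)
  then have "act (phi i * M) v = 0" by (simp add: phi module)
  moreover have "phi i * M = M + (g (sgen N i) * M) * Ycoroot (alpha_simple N j)"
    by (simp add: phi_def distrib_right mult.assoc Y)
  ultimately show ?thesis using Yv by (simp add: module)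
qed

end

lemma reduced_expr_reduced_word:
  assumes N: "2 \<le> N" and "reduced_expr N w k js"
  shows "reduced_word N js" and "w = Wmult (Wpow (piW N) k) (Wword N js)"
proof -
  have js: "set js \<subseteq> {..<N}" and w: "w = Wmult (Wpow (piW N) k) (Wword N js)"
    using assms(2) by (auto simp: reduced_expr_def Wword_def)
  then show "w = Wmult (Wpow (piW N) k) (Wword N js)" by simp
  show "reduced_word N js"
    using assms(2) js lengthW_diagram_aut_mult[OF diagram_aut_Wpow_piW[OF N] Wword_Wset[OF N js]]
    by (simp add: reduced_expr_def reduced_word_def w)
qed

lemma Wbeta_min_simple_preimage:
  assumes N: "2 \<le> N" and wmin: "Wmult P (Wword N js) \<in> Wbeta_min N beta" and P: "diagram_aut N P"
    and js: "reduced_word N js" and i: "i < N"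
    and "alpha_simple N i \<in> Wact_root (Wmult P (Wword N js)) ` Rbeta_pos N beta"
  obtains j i' where "j \<in> Pi_beta N beta" "i' < N" "Wact_root P (alpha_simple N i') = alpha_simple N i"
    "Wact_root (Wword N js) (alpha_simple N j) = alpha_simple N i'"
proof -
  let ?x = "Wword N js"
  obtain \<rho> where \<rho>: "\<rho> \<in> Rbeta_pos N beta" "Wact_root P (Wact_root ?x \<rho>) = alpha_simple N i"
    using assms(6) by (auto simp: Wact_root_mult)
  have "alpha_simple N i \<in> Wact_root P ` simple_roots N"
    using P i by (simp add: diagram_aut_def simple_roots_def)
  then obtain i' where i': "i' < N" "Wact_root P (alpha_simple N i') = alpha_simple N i"
    by (auto simp: simple_roots_def)
  then have "Wact_root ?x \<rho> = alpha_simple N i'"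
    using \<rho>(2) Wact_root_inj[of P N] P by (auto simp: diagram_aut_def)
  moreover have "Wact_root ?x (alpha_simple N c) \<in> Rpos N" if "c \<in> Pi_beta N beta" for c
    using Wbeta_min_alpha_simple_Rpos[OF N wmin P js that] .
  ultimately obtain j where "j \<in> Pi_beta N beta" "\<rho> = alpha_simple N j"
    using block_root_simple[OF reduced_word_Wset[OF N js] _ \<rho>(1)] by blast
  with i' \<open>Wact_root ?x \<rho> = alpha_simple N i'\<close> show ?thesis by (intro that) auto
qed

theorem lemma2p22:
  fixes N :: nat and beta :: "nat list" and zeta :: "(nat \<Rightarrow> complex) \<times> complex"
    and w :: Welt and i :: nat
    and \<iota> :: "complex \<Rightarrow> 'a::ring_1" and g :: "Welt \<Rightarrow> 'a" and Y :: "nat \<Rightarrow> 'a" and Z :: 'a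
    and act :: "'a \<Rightarrow> 'm::ab_group_add \<Rightarrow> 'm" and v :: 'm
  assumes "2 \<le> N"
    and "ordered_partition N beta"
    and "zeta \<in> zeta_beta N beta"
    and "w \<in> Wbeta_min N beta"
    and "i \<in> {1..N-1}"
    and "(i, Suc i, 0) \<in> Wact_root w ` Rbeta_pos N beta"
    and "dDAHA_hom N \<iota> g Y Z"
    and "is_module act"
    and "\<forall>u \<in> Wbar_beta N beta. act (g u) v = v"
    and "\<forall>xi \<in> tset N. act (hmap \<iota> Y Z N xi) v = act (\<iota> (zeta_eval N zeta xi)) v"
  shows "\<forall>k js. reduced_expr N w k js \<longrightarrow>
           act (g (sgen N i) * phi_expr N \<iota> g Y Z k js) v = act (phi_expr N \<iota> g Y Z k js) v"
proof (intro allI impI)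
  fix k js
  assume re: "reduced_expr N w k js"
  interpret dDAHA_image N \<iota> g Y Z using assms(1,7) by unfold_locales
  define P where "P = Wpow (piW N) k"
  have js: "reduced_word N js" and w: "w = Wmult P (Wword N js)"
    using reduced_expr_reduced_word[OF assms(1) re] by (simp_all add: P_def)
  have i: "i < N" "alpha_simple N i = (i, Suc i, 0)" using assms(5) by (auto simp: alpha_simple_def)
  obtain j i' where j: "j \<in> Pi_beta N beta" and i': "i' < N" "Wact_root P (alpha_simple N i') = alpha_simple N i"
    and xj: "Wact_root (Wword N js) (alpha_simple N j) = alpha_simple N i'"
    using Wbeta_min_simple_preimage[OF assms(1) assms(4)[unfolded w]
        diagram_aut_Wpow_piW[OF assms(1), of k, folded P_def] js i(1)] assms(6) w i(2)
    by metis
  have jN: "j < N" using j by (auto simp: Pi_beta_def)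
  have "phi_expr N \<iota> g Y Z k js = g P * prod_list (map phi js)"
    using phi_expr_eq js by (simp add: P_def reduced_word_def)
  moreover have "act (Ycoroot (alpha_simple N j)) v = - v"
    using act_Ycoroot_Pi_beta[OF assms(8,3) j assms(10)] .
  moreover note phi_intertwiner_conj[OF js i(1) jN i'(1) xj intertwines_Ycoroot_Wpow_piW[of k, folded P_def] i'(2)]
  moreover have "act (g (sgen N j)) v = v" using assms(9) sgen_Wbar_beta[OF j] by blast
  ultimately show "act (g (sgen N i) * phi_expr N \<iota> g Y Z k js) v = act (phi_expr N \<iota> g Y Z k js) v"
    using g_sgen_fixes_intertwined_vector[OF assms(8)] by simp
qed

end
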